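(* Let $a,\rho\in(0,1)$ and $m\ge 3$. Then: 1) $\Gamma_\rho(a)=\Lambda^{(m)}_\rho(a)$ (in particular the maximum in $\Lambda^{(m)}_\rho(a)$ is attained and its value does not depend on $m\ge3$). 2) Every optimal solution of the problem defining $\Gamma_\rho(a)$ (equivalently of the problem defining $\Lambda^{(m)}_\rho(a)$, with $(S,Z)$ having joint law $P(S=s,Z=z_{s,i})=p_{s,i}$) satisfies $\mathbb E[Z^2]=\mathbb E[SZ]$. 3) Every optimal solution $(z_{s,i},p_{s,i})$ of the problem defining $\Lambda^{(m)}_\rho(a)$ satisfies $z_{1-a,j}\ge z_{-a,i}+\tfrac12$ for all $i,j\in[m]$ with $z_{-a,i}>-a/\rho$ and $z_{1-a,j}<(1-a)/\rho$; moreover there exist $i\in[m]$ with $z_{-a,i}>-a/\rho$ and $j\in[m]$ with $z_{1-a,j}<(1-a)/\rho$. 4) The linear independence constraint qualification (LICQ) holds at every optimal solution of the problem defining $\Lambda^{(m)}_\rho(a)$, i.e. the gradients (with respect to all variables $(z_{s,i},p_{s,i})$) of the active inequality constraints and of the equality constraints are linearly independent there.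
   Context: Let $\Phi:[0,1]\to\mathbb R$ be continuous and strictly convex. Let $\mathcal S=\{-a,1-a\}$ and $P_S(-a)=1-a$, $P_S(1-a)=a$. $\Gamma_\rho(a):=\sup_{P_{Z|S}}\mathbb E[\Phi(a+\rho Z)]$ subject to $0\le a+\rho Z\le1$ a.s., $\mathbb E[Z]=0$, $\mathbb E[Z^2]\le\mathbb E[SZ]$, where $(S,Z)\sim P_SP_{Z|S}$ and the supremum is over conditional probability mass functions. For $m\ge3$, $$\Lambda^{(m)}_\rho(a):=\max\sum_{(s,i)\in\mathcal S\times[m]}p_{s,i}\Phi(a+\rho z_{s,i})$$ over $z_{s,i}\in\mathbb R$, $p_{s,i}>0$ ($(s,i)\in\mathcal S\times[m]$) subject to: $0\le a+\rho z_{s,i}\le1$ for all $(s,i)$; $\sum_{i\in[m]}p_{s,i}=P_S(s)$ for each $s\in\mathcal S$; $\sum_{s,i}p_{s,i}z_{s,i}=0$; $\sum_{s,i}p_{s,i}(z_{s,i}^2-sz_{s,i})\le0$. Here $[m]=\{1,\dots,m\}$. *)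

theory Defs
  imports "HOL-Probability.Probability"
begin

definition strictly_convex_on :: "real set \<Rightarrow> (real \<Rightarrow> real) \<Rightarrow> bool" where
  "strictly_convex_on A f \<longleftrightarrow>
     (\<forall>x\<in>A. \<forall>y\<in>A. \<forall>t::real. x \<noteq> y \<and> 0 < t \<and> t < 1 \<longrightarrow>
        f ((1 - t) * x + t * y) < (1 - t) * f x + t * f y)"

definition Sset :: "real \<Rightarrow> real set" where
  "Sset a = {-a, 1 - a}"

definition PS :: "real \<Rightarrow> real \<Rightarrow> real" where
  "PS a s = (if s = -a then 1 - a else a)"

(* E[f(S,Z)] for (S,Z) ~ P_S P_{Z|S} *)
definition jointE :: "real \<Rightarrow> (real \<Rightarrow> real pmf) \<Rightarrow> (real \<Rightarrow> real \<Rightarrow> real) \<Rightarrow> real" where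
  "jointE a Q f = (\<Sum>s\<in>Sset a. PS a s * measure_pmf.expectation (Q s) (f s))"

definition gamma_feasible :: "real \<Rightarrow> real \<Rightarrow> (real \<Rightarrow> real pmf) \<Rightarrow> bool" where
  "gamma_feasible a \<rho> Q \<longleftrightarrow>
     (\<forall>s\<in>Sset a. \<forall>z\<in>set_pmf (Q s). 0 \<le> a + \<rho> * z \<and> a + \<rho> * z \<le> 1) \<and>
     jointE a Q (\<lambda>s z. z) = 0 \<and>
     jointE a Q (\<lambda>s z. z\<^sup>2) \<le> jointE a Q (\<lambda>s z. s * z)"

definition gamma_obj :: "(real \<Rightarrow> real) \<Rightarrow> real \<Rightarrow> real \<Rightarrow> (real \<Rightarrow> real pmf) \<Rightarrow> real" where
  "gamma_obj \<Phi> a \<rho> Q = jointE a Q (\<lambda>s z. \<Phi> (a + \<rho> * z))"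

definition Gamma :: "(real \<Rightarrow> real) \<Rightarrow> real \<Rightarrow> real \<Rightarrow> real" where
  "Gamma \<Phi> a \<rho> = Sup {gamma_obj \<Phi> a \<rho> Q | Q. gamma_feasible a \<rho> Q}"

definition gamma_optimal :: "(real \<Rightarrow> real) \<Rightarrow> real \<Rightarrow> real \<Rightarrow> (real \<Rightarrow> real pmf) \<Rightarrow> bool" where
  "gamma_optimal \<Phi> a \<rho> Q \<longleftrightarrow> gamma_feasible a \<rho> Q \<and>
     (\<forall>Q'. gamma_feasible a \<rho> Q' \<longrightarrow> gamma_obj \<Phi> a \<rho> Q' \<le> gamma_obj \<Phi> a \<rho> Q)"

definition lam_feasible :: "real \<Rightarrow> real \<Rightarrow> nat \<Rightarrow> (real \<Rightarrow> nat \<Rightarrow> real) \<Rightarrow> (real \<Rightarrow> nat \<Rightarrow> real) \<Rightarrow> bool" where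
  "lam_feasible a \<rho> m z p \<longleftrightarrow>
     (\<forall>s\<in>Sset a. \<forall>i\<in>{1..m}. 0 \<le> a + \<rho> * z s i \<and> a + \<rho> * z s i \<le> 1 \<and> 0 < p s i) \<and>
     (\<forall>s\<in>Sset a. (\<Sum>i\<in>{1..m}. p s i) = PS a s) \<and>
     (\<Sum>s\<in>Sset a. \<Sum>i\<in>{1..m}. p s i * z s i) = 0 \<and>
     (\<Sum>s\<in>Sset a. \<Sum>i\<in>{1..m}. p s i * ((z s i)\<^sup>2 - s * z s i)) \<le> 0"

definition lam_obj :: "(real \<Rightarrow> real) \<Rightarrow> real \<Rightarrow> real \<Rightarrow> nat \<Rightarrow> (real \<Rightarrow> nat \<Rightarrow> real) \<Rightarrow> (real \<Rightarrow> nat \<Rightarrow> real) \<Rightarrow> real" where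
  "lam_obj \<Phi> a \<rho> m z p = (\<Sum>s\<in>Sset a. \<Sum>i\<in>{1..m}. p s i * \<Phi> (a + \<rho> * z s i))"

definition Lambda :: "(real \<Rightarrow> real) \<Rightarrow> real \<Rightarrow> real \<Rightarrow> nat \<Rightarrow> real" where
  "Lambda \<Phi> a \<rho> m = Sup {lam_obj \<Phi> a \<rho> m z p | z p. lam_feasible a \<rho> m z p}"

definition lam_optimal :: "(real \<Rightarrow> real) \<Rightarrow> real \<Rightarrow> real \<Rightarrow> nat \<Rightarrow> (real \<Rightarrow> nat \<Rightarrow> real) \<Rightarrow> (real \<Rightarrow> nat \<Rightarrow> real) \<Rightarrow> bool" where
  "lam_optimal \<Phi> a \<rho> m z p \<longleftrightarrow> lam_feasible a \<rho> m z p \<and>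
     (\<forall>z' p'. lam_feasible a \<rho> m z' p' \<longrightarrow> lam_obj \<Phi> a \<rho> m z' p' \<le> lam_obj \<Phi> a \<rho> m z p)"

(* Variable vector: x (False, s, i) = z_{s,i},  x (True, s, i) = p_{s,i}. *)
definition lam_vars :: "real \<Rightarrow> nat \<Rightarrow> (bool \<times> real \<times> nat) set" where
  "lam_vars a m = UNIV \<times> Sset a \<times> {1..m}"

definition pack :: "(real \<Rightarrow> nat \<Rightarrow> real) \<Rightarrow> (real \<Rightarrow> nat \<Rightarrow> real) \<Rightarrow> (bool \<times> real \<times> nat \<Rightarrow> real)" where
  "pack z p = (\<lambda>(b, s, i). if b then p s i else z s i)"

(* constraints: inequalities g \<le> 0 (Lo, Up, Second) and equalities h = 0 (EqP, Mean) *)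
datatype constr = Lo real nat | Up real nat | EqP real | Mean | Second

fun cfun :: "real \<Rightarrow> real \<Rightarrow> nat \<Rightarrow> constr \<Rightarrow> (bool \<times> real \<times> nat \<Rightarrow> real) \<Rightarrow> real" where
  "cfun a \<rho> m (Lo s i) x = - (a + \<rho> * x (False, s, i))"
| "cfun a \<rho> m (Up s i) x = a + \<rho> * x (False, s, i) - 1"
| "cfun a \<rho> m (EqP s) x = (\<Sum>i\<in>{1..m}. x (True, s, i)) - PS a s"
| "cfun a \<rho> m Mean x = (\<Sum>s\<in>Sset a. \<Sum>i\<in>{1..m}. x (True, s, i) * x (False, s, i))"
| "cfun a \<rho> m Second x =
     (\<Sum>s\<in>Sset a. \<Sum>i\<in>{1..m}. x (True, s, i) * ((x (False, s, i))\<^sup>2 - s * x (False, s, i)))"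

definition equality_constrs :: "real \<Rightarrow> constr set" where
  "equality_constrs a = {EqP s | s. s \<in> Sset a} \<union> {Mean}"

definition inequality_constrs :: "real \<Rightarrow> nat \<Rightarrow> constr set" where
  "inequality_constrs a m = {Lo s i | s i. s \<in> Sset a \<and> i \<in> {1..m}}
      \<union> {Up s i | s i. s \<in> Sset a \<and> i \<in> {1..m}} \<union> {Second}"

definition active_constrs :: "real \<Rightarrow> real \<Rightarrow> nat \<Rightarrow> (bool \<times> real \<times> nat \<Rightarrow> real) \<Rightarrow> constr set" where
  "active_constrs a \<rho> m x =
     {c \<in> inequality_constrs a m. cfun a \<rho> m c x = 0} \<union> equality_constrs a"

definition partial :: "((bool \<times> real \<times> nat \<Rightarrow> real) \<Rightarrow> real) \<Rightarrow> (bool \<times> real \<times> nat \<Rightarrow> real)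
                        \<Rightarrow> (bool \<times> real \<times> nat) \<Rightarrow> real" where
  "partial F x v = deriv (\<lambda>t. F (x(v := t))) (x v)"

definition LICQ :: "real \<Rightarrow> real \<Rightarrow> nat \<Rightarrow> (bool \<times> real \<times> nat \<Rightarrow> real) \<Rightarrow> bool" where
  "LICQ a \<rho> m x \<longleftrightarrow>
     (\<forall>c :: constr \<Rightarrow> real.
        (\<forall>v\<in>lam_vars a m. (\<Sum>k\<in>active_constrs a \<rho> m x. c k * partial (cfun a \<rho> m k) x v) = 0)
        \<longrightarrow> (\<forall>k\<in>active_constrs a \<rho> m x. c k = 0))"

end

theory Submission
  imports Defs
begin

text \<open>Conditionally on \<open>S\<close>, a law of \<open>Z\<close> enters both problems only through its moment vector
  \<open>(E Z, E Z\<^sup>2, E \<phi>(Z))\<close>, \<open>\<phi> z = \<Phi>(a + \<rho> z)\<close>, and these vectors lie in the convex hull of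
  the curve \<open>z \<mapsto> (z, z\<^sup>2, \<phi> z)\<close>. So \<open>\<Gamma>\<close> and \<open>\<Lambda>\<^bsup>(m)\<^esup>\<close> are bounded by one compact
  problem over pairs of hull points, whose maximum is attained. A maximiser lies on the upper
  boundary of the hull, hence (Caratheodory on a supporting plane) is a mixture of three curve
  points, which fit into \<open>m \<ge> 3\<close> slots: \<open>\<Lambda>\<^bsup>(m)\<^esup> = \<Gamma>\<close>. Strict convexity lets any slack in
  \<open>E[Z\<^sup>2] \<le> E[SZ]\<close> be spent on spreading mass off the chord, which raises the value; so the
  constraint is tight, and perturbations of two atoms that would create slack give the
  ordering and the \<open>1/2\<close>-separation of interior atoms. These two interior atoms finally
  pin down the multipliers of the active constraints, which gives LICQ.\<close>

lemma convex_on_two_point_spread: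
  fixes f :: "real \<Rightarrow> real"
  assumes conv: "convex_on {l..r} f" and x: "x \<in> {l..r}" and y: "y \<in> {l..r}"
    and wx: "0 \<le> wx" and wy: "0 \<le> wy" and mean: "wx * l + wy * r = wx * x + wy * y"
  shows "wx * f x + wy * f y \<le> wx * f l + wy * f r"
proof (cases "l = r")
  case True
  then show ?thesis using x y by simp
next
  case False
  then have d: "r - l > 0" using x by simp
  define s where "s = (f r - f l) / (r - l)"
  have "wx * f x + wy * f y \<le> wx * (s * (x - l) + f l) + wy * (s * (y - l) + f l)"
    using convex_onD_Icc'[OF conv x] convex_onD_Icc'[OF conv y] wx wy
    unfolding s_def by (intro add_mono mult_left_mono) auto
  also have "\<dots> = (wx + wy) * f l + s * (wx * (x - l) + wy * (y - l))"
    by (simp add: algebra_simps)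
  also have "wx * (x - l) + wy * (y - l) = wy * (r - l)"
    using mean by (simp add: algebra_simps)
  also have "(wx + wy) * f l + s * (wy * (r - l)) = wx * f l + wy * f r"
    using d by (simp add: s_def field_simps)
  finally show ?thesis .
qed

lemma convex_sum_replace:
  fixes x :: "'b \<Rightarrow> 'a::real_vector"
  assumes "convex C" "finite I" "\<And>i. i \<in> I \<Longrightarrow> 0 \<le> w i" "sum w I = 1"
    "\<And>i. i \<in> I \<Longrightarrow> x i \<in> C" "j \<in> I" "y \<in> C"
  shows "(\<Sum>i\<in>I. w i *\<^sub>R x i) + w j *\<^sub>R (y - x j) \<in> C"
proof -
  have "(\<Sum>i\<in>I. w i *\<^sub>R (x(j := y)) i)
      = (\<Sum>i\<in>I. w i *\<^sub>R x i + (if i = j then w j *\<^sub>R (y - x j) else 0))"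
    by (rule sum.cong) (auto simp: algebra_simps)
  also have "\<dots> = (\<Sum>i\<in>I. w i *\<^sub>R x i) + w j *\<^sub>R (y - x j)"
    using assms(2,6) by (simp add: sum.distrib)
  finally show ?thesis
    using convex_sum[OF assms(2,1,4), of "x(j := y)"] assms(3,5,7) by auto
qed

lemma caratheodory_not_interior:
  fixes K :: "'a::euclidean_space set"
  assumes K: "compact K" and u: "u \<in> convex hull K" "u \<notin> interior (convex hull K)"
  obtains S where "finite S" "S \<subseteq> K" "card S \<le> DIM('a)" "u \<in> convex hull S"
proof (cases "aff_dim K < DIM('a)")
  case True
  then show ?thesis
    using u(1) that unfolding caratheodory_aff_dim[of K] by fastforce
next
  case False
  then have "affine hull (convex hull K) = UNIV"
    using aff_dim_le_DIM[of K] aff_dim_eq_full[of K] by simp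
  then have "u \<notin> rel_interior (convex hull K)"
    using u(2) rel_interior_interior by metis
  then obtain c where c: "c \<noteq> 0" and supp: "\<And>y. y \<in> convex hull K \<Longrightarrow> c \<bullet> u \<le> c \<bullet> y"
    using supporting_hyperplane_relative_frontier[of "convex hull K" u] u(1) closure_subset
    by (metis convex_convex_hull subsetD)
  define H where "H = {y. c \<bullet> y = c \<bullet> u}"
  have "convex hull K \<inter> H face_of convex hull K"
    unfolding H_def by (rule face_of_Int_supporting_hyperplane_ge) (use supp in auto)
  then obtain S' where S': "S' \<subseteq> K" "convex hull K \<inter> H = convex hull S'"
    using face_of_convex_hull_subset[OF K] by metis
  have "S' \<subseteq> H"
    using S'(2) hull_subset[of S' convex] by blast
  then have "aff_dim S' \<le> DIM('a) - 1"
    using aff_dim_subset[of S' H] c unfolding H_def by simp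
  moreover have "u \<in> convex hull S'"
    using S'(2) u(1) unfolding H_def by blast
  ultimately obtain S where "finite S" "S \<subseteq> S'" "card S \<le> aff_dim S' + 1" "u \<in> convex hull S"
    unfolding caratheodory_aff_dim[of S'] by blast
  then show ?thesis
    using that S'(1) \<open>aff_dim S' \<le> DIM('a) - 1\<close> by fastforce
qed

lemma finite_nonempty_image_atLeastAtMost:
  assumes "finite P" "P \<noteq> {}" "card P \<le> m"
  obtains x :: "nat \<Rightarrow> 'a" where "x ` {1..m} = P"
proof -
  obtain h where h: "bij_betw h {1..card P} P"
    using ex_bij_betw_nat_finite_1[OF assms(1)] by blast
  have k: "1 \<le> card P"
    using assms(1,2) by (simp add: Suc_le_eq card_gt_0_iff)
  have "(\<lambda>i. h (min i (card P))) ` {1..m} = P"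
  proof
    show "(\<lambda>i. h (min i (card P))) ` {1..m} \<subseteq> P"
      using h k by (auto simp: bij_betw_def)
    show "P \<subseteq> (\<lambda>i. h (min i (card P))) ` {1..m}"
    proof
      fix y assume "y \<in> P"
      then obtain j where "j \<in> {1..card P}" "y = h j"
        using h unfolding bij_betw_def by blast
      then show "y \<in> (\<lambda>i. h (min i (card P))) ` {1..m}"
        using assms(3) by (intro image_eqI[of _ _ j]) (auto simp: min_absorb1)
    qed
  qed
  then show ?thesis
    using that by blast
qed

lemma sum_scaleR_split_fibres:
  fixes F :: "'a \<Rightarrow> 'b::real_vector"
  assumes I: "finite I" and x: "x ` I = P"
  shows "(\<Sum>i\<in>I. (v (x i) / card {j \<in> I. x j = x i}) *\<^sub>R F (x i)) = (\<Sum>y\<in>P. v y *\<^sub>R F y)"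
proof -
  have "(\<Sum>i\<in>I. (v (x i) / card {j \<in> I. x j = x i}) *\<^sub>R F (x i))
      = (\<Sum>y\<in>P. \<Sum>i\<in>{i \<in> I. x i = y}. (v y / card {j \<in> I. x j = y}) *\<^sub>R F y)"
    unfolding sum.image_gen[OF I, of _ x] x by (intro sum.cong refl) auto
  also have "\<dots> = (\<Sum>y\<in>P. v y *\<^sub>R F y)"
  proof (intro sum.cong refl)
    fix y assume "y \<in> P"
    then have "0 < card {j \<in> I. x j = y}"
      using I x by (force simp: card_gt_0_iff)
    then show "(\<Sum>i\<in>{i \<in> I. x i = y}. (v y / card {j \<in> I. x j = y}) *\<^sub>R F y) = v y *\<^sub>R F y"
      by (simp only: sum_constant_scaleR) simp
  qed
  finally show ?thesis .
qed

text \<open>Atoms of positive weight are repeated over the surplus slots, sharing their weight.\<close>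

lemma convex_hull_finite_positive_weights:
  fixes S :: "'a::real_vector set"
  assumes S: "finite S" "card S \<le> m" and u: "u \<in> convex hull S"
  obtains w :: "nat \<Rightarrow> real" and x :: "nat \<Rightarrow> 'a"
  where "\<And>i. i \<in> {1..m} \<Longrightarrow> 0 < w i \<and> x i \<in> S" "sum w {1..m} = 1"
    "u = (\<Sum>i\<in>{1..m}. w i *\<^sub>R x i)"
proof -
  obtain v where v: "\<forall>y\<in>S. 0 \<le> v y" "sum v S = 1" "(\<Sum>y\<in>S. v y *\<^sub>R y) = u"
    using u unfolding convex_hull_finite[OF S(1)] by blast
  define P where "P = {y \<in> S. 0 < v y}"
  have P: "finite P" "P \<subseteq> S"
    using S(1) by (auto simp: P_def)
  have sum_P: "(\<Sum>y\<in>P. v y *\<^sub>R F y) = (\<Sum>y\<in>S. v y *\<^sub>R F y)" for F :: "'a \<Rightarrow> 'c::real_vector"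
    by (rule sum.mono_neutral_left) (use S(1) v(1) in \<open>auto simp: P_def less_le\<close>)
  have "P \<noteq> {}"
    using sum_P[of "\<lambda>_. 1::real"] v(2) by auto
  moreover have "card P \<le> m"
    using card_mono[OF S(1) P(2)] S(2) by simp
  ultimately obtain x where x: "x ` {1..m} = P"
    using finite_nonempty_image_atLeastAtMost[OF P(1)] by blast
  define w where "w i = v (x i) / card {j \<in> {1..m}. x j = x i}" for i
  show ?thesis
  proof
    show "0 < w i \<and> x i \<in> S" if "i \<in> {1..m}" for i
    proof -
      have "x i \<in> P" "0 < card {j \<in> {1..m}. x j = x i}"
        using that x by (auto simp: card_gt_0_iff)
      then show ?thesis
        using P(2) by (auto simp: w_def P_def)
    qed
    show "sum w {1..m} = 1"
      using sum_scaleR_split_fibres[OF finite_atLeastAtMost x, of v "\<lambda>_. 1::real"]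
        sum_P[of "\<lambda>_. 1::real"] v(2)
      by (simp add: w_def)
    show "u = (\<Sum>i\<in>{1..m}. w i *\<^sub>R x i)"
      using sum_scaleR_split_fibres[OF finite_atLeastAtMost x, of v "\<lambda>y. y"] sum_P[of "\<lambda>y. y"] v(3)
      by (simp add: w_def)
  qed
qed

lemma strictly_convex_onD:
  "strictly_convex_on A f \<Longrightarrow> x \<in> A \<Longrightarrow> y \<in> A \<Longrightarrow> x \<noteq> y \<Longrightarrow> 0 < t \<Longrightarrow> t < 1
    \<Longrightarrow> f ((1 - t) * x + t * y) < (1 - t) * f x + t * f y"
  by (simp add: strictly_convex_on_def)

lemma strictly_convex_on_imp_convex_on:
  assumes "convex A" "strictly_convex_on A f"
  shows "convex_on A f"
proof (rule convex_onI[OF _ assms(1)])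
  fix t x y :: real
  assume "0 < t" "t < 1" "x \<in> A" "y \<in> A"
  then show "f ((1 - t) *\<^sub>R x + t *\<^sub>R y) \<le> (1 - t) * f x + t * f y"
    using assms(2) unfolding strictly_convex_on_def
    by (cases "x = y") (auto simp flip: distrib_right intro: less_imp_le)
qed

lemma sum_update:
  fixes f :: "'b \<Rightarrow> 'a::ab_group_add"
  assumes "finite I" "j \<in> I"
  shows "(\<Sum>i\<in>I. if i = j then t else f i) = sum f I - f j + t"
proof -
  have "(\<Sum>i\<in>I. if i = j then t else f i) = (\<Sum>i\<in>I. f i + (if i = j then t - f j else 0))"
    by (rule sum.cong) auto
  then show ?thesis
    using assms by (simp add: sum.distrib algebra_simps)
qed

lemma integrable_measure_pmf_continuous_on:
  fixes g :: "'a::topological_space \<Rightarrow> real"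
  assumes "compact K" "set_pmf P \<subseteq> K" "continuous_on K g"
  shows "integrable (measure_pmf P) g"
proof -
  obtain B where "\<forall>y\<in>g ` K. norm y \<le> B"
    using compact_imp_bounded[OF compact_continuous_image[OF assms(3,1)]] bounded_iff by metis
  then show ?thesis
    using assms(2) by (intro measure_pmf.integrable_const_bound[where B = B])
      (auto simp: AE_measure_pmf_iff)
qed

lemma sum_scaleR_triple_components:
  fixes w :: "'b \<Rightarrow> real" and x :: "'b \<Rightarrow> real \<times> real \<times> real"
  shows "fst (\<Sum>i\<in>I. w i *\<^sub>R x i) = (\<Sum>i\<in>I. w i * fst (x i))"
    "fst (snd (\<Sum>i\<in>I. w i *\<^sub>R x i)) = (\<Sum>i\<in>I. w i * fst (snd (x i)))"
    "snd (snd (\<Sum>i\<in>I. w i *\<^sub>R x i)) = (\<Sum>i\<in>I. w i * snd (snd (x i)))"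
  by (simp_all add: fst_sum snd_sum)

lemma sum_Sset: "(\<Sum>s\<in>Sset a. g s) = g (-a) + g (1 - a)"
  by (simp add: Sset_def)

lemma PS_minus: "PS a (-a) = 1 - a" and PS_plus: "PS a (1 - a) = a"
  by (simp_all add: PS_def)

definition lam_gap :: "real \<Rightarrow> nat \<Rightarrow> (real \<Rightarrow> nat \<Rightarrow> real) \<Rightarrow> (real \<Rightarrow> nat \<Rightarrow> real) \<Rightarrow> real" where
  "lam_gap a m z p = (\<Sum>s\<in>Sset a. \<Sum>i\<in>{1..m}. p s i * ((z s i)\<^sup>2 - s * z s i))"

locale moment_problem =
  fixes \<Phi> :: "real \<Rightarrow> real" and a \<rho> :: real
  assumes cont: "continuous_on {0..1} \<Phi>"
    and sconv: "strictly_convex_on {0..1} \<Phi>"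
    and a_pos: "0 < a" and a_lt1: "a < 1"
    and rho_pos: "0 < \<rho>" and rho_lt1: "\<rho> < 1"
begin

definition zmin :: real where "zmin = -a / \<rho>"

definition zmax :: real where "zmax = (1 - a) / \<rho>"

definition \<phi> :: "real \<Rightarrow> real" where "\<phi> z = \<Phi> (a + \<rho> * z)"

lemma range_iff: "z \<in> {zmin..zmax} \<longleftrightarrow> 0 \<le> a + \<rho> * z \<and> a + \<rho> * z \<le> 1"
  using rho_pos by (auto simp: zmin_def zmax_def field_simps)

lemma zmin_neg: "zmin < 0" and zmax_pos: "0 < zmax"
  using a_pos a_lt1 rho_pos by (auto simp: zmin_def zmax_def)

lemma zmin_less_zmax: "zmin < zmax"
  using zmin_neg zmax_pos by simp

lemma \<phi>_strictly_convex: "strictly_convex_on {zmin..zmax} \<phi>"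
  unfolding strictly_convex_on_def
proof (intro ballI allI impI)
  fix x y t :: real
  assume xy: "x \<in> {zmin..zmax}" "y \<in> {zmin..zmax}" and t: "x \<noteq> y \<and> 0 < t \<and> t < 1"
  have "a + \<rho> * ((1 - t) * x + t * y) = (1 - t) * (a + \<rho> * x) + t * (a + \<rho> * y)"
    by (simp add: algebra_simps)
  moreover have "a + \<rho> * x \<noteq> a + \<rho> * y"
    using t rho_pos by simp
  ultimately show "\<phi> ((1 - t) * x + t * y) < (1 - t) * \<phi> x + t * \<phi> y"
    using sconv xy t unfolding strictly_convex_on_def \<phi>_def range_iff by auto
qed

lemma \<phi>_convex: "convex_on {zmin..zmax} \<phi>"
  by (simp add: strictly_convex_on_imp_convex_on \<phi>_strictly_convex)

lemma \<phi>_continuous: "continuous_on {zmin..zmax} \<phi>"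
  unfolding \<phi>_def
  by (rule continuous_on_compose2[OF cont]) (auto intro!: continuous_intros simp: range_iff[simplified])

definition moment_point :: "real \<Rightarrow> real \<times> real \<times> real" where
  "moment_point z = (z, z\<^sup>2, \<phi> z)"

definition moment_hull :: "(real \<times> real \<times> real) set" where
  "moment_hull = convex hull (moment_point ` {zmin..zmax})"

lemma moment_point_components [simp]:
  "fst (moment_point z) = z" "fst (snd (moment_point z)) = z\<^sup>2" "snd (snd (moment_point z)) = \<phi> z"
  by (simp_all add: moment_point_def)

lemma compact_moment_curve: "compact (moment_point ` {zmin..zmax})"
  unfolding moment_point_def
  by (intro compact_continuous_image continuous_intros \<phi>_continuous) simp

lemma compact_moment_hull: "compact moment_hull"
  unfolding moment_hull_def by (rule compact_convex_hull[OF compact_moment_curve])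

lemma convex_moment_hull: "convex moment_hull"
  unfolding moment_hull_def by simp

lemma moment_point_in_hull: "z \<in> {zmin..zmax} \<Longrightarrow> moment_point z \<in> moment_hull"
  unfolding moment_hull_def by (simp add: hull_inc)

lemma fst_moment_hull: "u \<in> moment_hull \<Longrightarrow> fst u \<in> {zmin..zmax}"
proof -
  have "fst ` moment_hull = convex hull (fst ` moment_point ` {zmin..zmax})"
    unfolding moment_hull_def
    by (rule convex_hull_linear_image[OF bounded_linear.linear[OF bounded_linear_fst]])
  also have "\<dots> = {zmin..zmax}"
    by (simp add: image_image convex_hull_eq)
  finally show "u \<in> moment_hull \<Longrightarrow> fst u \<in> {zmin..zmax}"
    by blast
qed

text \<open>\<open>(zmin + zmax) z - zmin zmax - z\<^sup>2 = (z - zmin) (zmax - z)\<close> vanishes on the curve only at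
  the endpoints, so the mixtures on the chord are those supported on \<open>{zmin, zmax}\<close>.\<close>

lemma mixture_on_chord:
  assumes S: "S \<subseteq> moment_point ` {zmin..zmax}" "sum w S = 1"
    and endpoints: "\<And>x. x \<in> S \<Longrightarrow> w x \<noteq> 0 \<Longrightarrow> fst x = zmin \<or> fst x = zmax"
  defines "u \<equiv> \<Sum>x\<in>S. w x *\<^sub>R x"
  shows "fst (snd u) = (zmin + zmax) * fst u - zmin * zmax"
proof -
  have "w x * fst (snd x) = w x * ((zmin + zmax) * fst x - zmin * zmax)" if "x \<in> S" for x
    using S(1) that endpoints[OF that]
    by (cases "w x = 0") (auto simp: power2_eq_square algebra_simps)
  then have "fst (snd u) = (\<Sum>x\<in>S. w x * ((zmin + zmax) * fst x - zmin * zmax))"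
    unfolding u_def sum_scaleR_triple_components by (rule sum.cong[OF refl])
  also have "\<dots> = (zmin + zmax) * fst u - zmin * zmax"
    unfolding u_def sum_scaleR_triple_components
    using S(2) by (simp add: algebra_simps sum_subtractf sum_distrib_left flip: sum_distrib_right)
  finally show ?thesis .
qed

lemma moment_hull_endpoint_on_chord:
  assumes u: "u \<in> moment_hull" and e: "fst u = zmin \<or> fst u = zmax"
  shows "fst (snd u) = (zmin + zmax) * fst u - zmin * zmax"
proof -
  obtain S w where S: "finite S" "S \<subseteq> moment_point ` {zmin..zmax}" "\<forall>x\<in>S. 0 \<le> w x" "sum w S = 1"
    and u_sum: "(\<Sum>x\<in>S. w x *\<^sub>R x) = u"
    using u unfolding moment_hull_def convex_hull_explicit by blast
  have u_eq: "u = (\<Sum>x\<in>S. w x *\<^sub>R x)"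
    using u_sum by simp
  have range: "fst x \<in> {zmin..zmax}" if "x \<in> S" for x
    using S(2) that by auto
  define d where "d x = (if fst u = zmin then fst x - zmin else zmax - fst x)"
    for x :: "real \<times> real \<times> real"
  have "(\<Sum>x\<in>S. w x * d x) = (if fst u = zmin then fst u - zmin else zmax - fst u)"
    unfolding u_eq sum_scaleR_triple_components d_def
    using S(4) by (simp add: algebra_simps sum_subtractf sum_distrib_left flip: sum_distrib_right)
  also have "\<dots> = 0"
    using e by auto
  finally have "\<forall>x\<in>S. w x * d x = 0"
    using range S(1,3) by (subst sum_nonneg_eq_0_iff[symmetric]) (auto simp: d_def)
  then have "fst x = zmin \<or> fst x = zmax" if "x \<in> S" "w x \<noteq> 0" for x
    using that by (auto simp: d_def split: if_splits)
  then show ?thesis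
    unfolding u_eq by (rule mixture_on_chord[OF S(2,4)])
qed

text \<open>Off the chord some atom \<open>z\<^sub>0\<close> of positive weight is interior; splitting it into
  \<open>z\<^sub>0 \<plusminus> \<delta>\<close> keeps the mean, raises the second moment by \<open>w\<^sub>0 \<delta>\<^sup>2\<close> and, by strict
  convexity, strictly raises the \<open>\<phi>\<close>-moment.\<close>

lemma moment_hull_raise:
  assumes u: "u \<in> moment_hull" and off_chord: "fst (snd u) \<noteq> (zmin + zmax) * fst u - zmin * zmax"
    and \<epsilon>: "0 < \<epsilon>"
  obtains u' where "u' \<in> moment_hull" "fst u' = fst u" "fst (snd u) \<le> fst (snd u')"
    "fst (snd u') \<le> fst (snd u) + \<epsilon>" "snd (snd u) < snd (snd u')"
proof -
  obtain S w where S: "finite S" "S \<subseteq> moment_point ` {zmin..zmax}" "\<forall>x\<in>S. 0 \<le> w x" "sum w S = 1"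
    and u_eq: "(\<Sum>x\<in>S. w x *\<^sub>R x) = u"
    using u unfolding moment_hull_def convex_hull_explicit by blast
  obtain z0 where z0: "moment_point z0 \<in> S" "0 < w (moment_point z0)" "zmin < z0" "z0 < zmax"
  proof -
    have "\<not> (\<forall>x\<in>S. w x \<noteq> 0 \<longrightarrow> fst x = zmin \<or> fst x = zmax)"
      using mixture_on_chord[OF S(2,4)] off_chord u_eq by blast
    then obtain x where "x \<in> S" "w x \<noteq> 0" "fst x \<noteq> zmin" "fst x \<noteq> zmax"
      by blast
    moreover obtain z where "z \<in> {zmin..zmax}" "x = moment_point z"
      using S(2) \<open>x \<in> S\<close> by blast
    ultimately show ?thesis
      using that[of z] S(3) by force
  qed
  define w0 where "w0 = w (moment_point z0)"
  define \<delta> where "\<delta> = min (min (z0 - zmin) (zmax - z0)) (min 1 (\<epsilon> / w0))"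
  have w0: "0 < w0"
    using z0 by (simp add: w0_def)
  have "0 < \<delta>" "\<delta> \<le> z0 - zmin" "\<delta> \<le> zmax - z0" "\<delta> \<le> 1" "\<delta> \<le> \<epsilon> / w0"
    using z0 \<epsilon> w0 by (auto simp: \<delta>_def)
  then have \<delta>: "0 < \<delta>" "z0 + \<delta> \<in> {zmin..zmax}" "z0 - \<delta> \<in> {zmin..zmax}"
    and "\<delta>\<^sup>2 \<le> \<delta>" "w0 * \<delta> \<le> \<epsilon>"
    using w0 by (auto simp: power2_eq_square mult_left_le_one_le pos_le_divide_eq mult.commute)
  then have small: "w0 * \<delta>\<^sup>2 \<le> \<epsilon>"
    using w0 by (meson mult_left_mono less_imp_le order_trans)
  define Y where "Y = (1/2) *\<^sub>R moment_point (z0 + \<delta>) + (1/2) *\<^sub>R moment_point (z0 - \<delta>)"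
  have "Y \<in> moment_hull"
    unfolding Y_def using convex_moment_hull[unfolded convex_def] moment_point_in_hull \<delta> by simp
  have "u + w0 *\<^sub>R (Y - moment_point z0) \<in> moment_hull"
    unfolding u_eq[symmetric] w0_def
    by (rule convex_sum_replace[OF convex_moment_hull S(1), of w "\<lambda>x. x"])
      (use S moment_point_in_hull z0(1) \<open>Y \<in> moment_hull\<close> in auto)
  moreover have "\<phi> z0 < (1/2) * \<phi> (z0 + \<delta>) + (1/2) * \<phi> (z0 - \<delta>)"
  proof -
    have "(1 - 1/2) * (z0 + \<delta>) + 1/2 * (z0 - \<delta>) = z0"
      by (simp add: field_simps)
    moreover have "z0 + \<delta> \<noteq> z0 - \<delta>"
      using \<delta>(1) by simp
    ultimately show ?thesis
      using strictly_convex_onD[OF \<phi>_strictly_convex \<delta>(2,3), of "1/2"] by simp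
  qed
  moreover have "fst (u + w0 *\<^sub>R (Y - moment_point z0)) = fst u"
    by (simp add: Y_def field_simps)
  moreover have "fst (snd (u + w0 *\<^sub>R (Y - moment_point z0))) = fst (snd u) + w0 * \<delta>\<^sup>2"
    by (simp add: Y_def field_simps power2_eq_square)
  moreover have "snd (snd (u + w0 *\<^sub>R (Y - moment_point z0)))
      = snd (snd u) + w0 * ((1/2) * \<phi> (z0 + \<delta>) + (1/2) * \<phi> (z0 - \<delta>) - \<phi> z0)"
    by (simp add: Y_def field_simps)
  ultimately show ?thesis
    using that w0 small by simp
qed

text \<open>The problem in moment coordinates: \<open>u\<close> and \<open>v\<close> are the moment vectors of \<open>Z\<close>
  given \<open>S = -a\<close> and given \<open>S = 1 - a\<close>, and \<open>hull_gap u v\<close> is \<open>E[Z\<^sup>2] - E[SZ]\<close>.\<close>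

definition hull_gap :: "real \<times> real \<times> real \<Rightarrow> real \<times> real \<times> real \<Rightarrow> real" where
  "hull_gap u v = (1 - a) * (fst (snd u) + a * fst u) + a * (fst (snd v) - (1 - a) * fst v)"

definition hull_value :: "real \<times> real \<times> real \<Rightarrow> real \<times> real \<times> real \<Rightarrow> real" where
  "hull_value u v = (1 - a) * snd (snd u) + a * snd (snd v)"

definition hull_feasible :: "real \<times> real \<times> real \<Rightarrow> real \<times> real \<times> real \<Rightarrow> bool" where
  "hull_feasible u v \<longleftrightarrow> u \<in> moment_hull \<and> v \<in> moment_hull \<and>
     (1 - a) * fst u + a * fst v = 0 \<and> hull_gap u v \<le> 0"

definition hull_max :: real where
  "hull_max = Sup {hull_value u v | u v. hull_feasible u v}"

lemma hull_optimum_exists: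
  "\<exists>u v. hull_feasible u v \<and> (\<forall>u' v'. hull_feasible u' v' \<longrightarrow> hull_value u' v' \<le> hull_value u v)"
proof -
  define F where "F = {w. hull_feasible (fst w) (snd w)}"
  have "F = (moment_hull \<times> moment_hull) \<inter> {w. (1 - a) * fst (fst w) + a * fst (snd w) = 0}
      \<inter> {w. hull_gap (fst w) (snd w) \<le> 0}"
    by (auto simp: F_def hull_feasible_def)
  also have "compact \<dots>"
  proof (intro compact_Int_closed)
    show "compact (moment_hull \<times> moment_hull)"
      by (simp add: compact_Times compact_moment_hull)
    show "closed {w. (1 - a) * fst (fst w) + a * fst (snd w) = 0}"
      by (intro closed_Collect_eq continuous_intros)
    show "closed {w. hull_gap (fst w) (snd w) \<le> 0}"
      unfolding hull_gap_def by (intro closed_Collect_le continuous_intros)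
  qed
  finally have "compact F" .
  moreover have "(moment_point 0, moment_point 0) \<in> F"
    using moment_point_in_hull zmin_neg zmax_pos by (simp add: F_def hull_feasible_def hull_gap_def)
  moreover have "continuous_on F (\<lambda>w. hull_value (fst w) (snd w))"
    unfolding hull_value_def by (intro continuous_intros)
  ultimately obtain w where "w \<in> F" "\<forall>w'\<in>F. hull_value (fst w') (snd w') \<le> hull_value (fst w) (snd w)"
    using continuous_attains_sup[of F] by blast
  then show ?thesis
    unfolding F_def by (intro exI[of _ "fst w"] exI[of _ "snd w"]) auto
qed

lemma hull_value_le_max: "hull_feasible u v \<Longrightarrow> hull_value u v \<le> hull_max"
  and hull_max_attained: "\<exists>u v. hull_feasible u v \<and> hull_value u v = hull_max"
proof -
  obtain u0 v0 where opt: "hull_feasible u0 v0"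
    "\<And>u v. hull_feasible u v \<Longrightarrow> hull_value u v \<le> hull_value u0 v0"
    using hull_optimum_exists by blast
  have "hull_max = hull_value u0 v0"
    unfolding hull_max_def using opt by (intro cSup_eq_maximum) blast+
  then show "hull_feasible u v \<Longrightarrow> hull_value u v \<le> hull_max"
    using opt by simp
  show "\<exists>u v. hull_feasible u v \<and> hull_value u v = hull_max"
    using opt \<open>hull_max = hull_value u0 v0\<close> by (intro exI[of _ u0] exI[of _ v0]) simp
qed

text \<open>On the chord, \<open>hull_gap u v = - zmin zmax + a (1 - a) (fst u - fst v)\<close>, which is at least
  \<open>a (1 - a) (1/\<rho>\<^sup>2 - 1/\<rho>) > 0\<close> because \<open>\<rho> < 1\<close>.\<close>

lemma hull_chord_infeasible:
  assumes "hull_feasible u v"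
    and "fst (snd u) = (zmin + zmax) * fst u - zmin * zmax"
    and "fst (snd v) = (zmin + zmax) * fst v - zmin * zmax"
  shows False
proof -
  have mean: "(1 - a) * fst u + a * fst v = 0" and "fst u \<ge> zmin" "fst v \<le> zmax"
    using assms(1) fst_moment_hull unfolding hull_feasible_def by auto
  then have "a * (1 - a) * (zmin - zmax) \<le> a * (1 - a) * (fst u - fst v)"
    using a_pos a_lt1 by (intro mult_left_mono) auto
  moreover have "hull_gap u v = (zmin + zmax) * ((1 - a) * fst u + a * fst v) - zmin * zmax
      + a * (1 - a) * (fst u - fst v)"
    unfolding hull_gap_def assms(2,3) by (simp add: algebra_simps)
  then have "hull_gap u v = - zmin * zmax + a * (1 - a) * (fst u - fst v)"
    using mean by simp
  moreover have "a * (1 - a) * (zmin - zmax) = - (a * (1 - a) * (1 / \<rho>))"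
    "- zmin * zmax = a * (1 - a) * (1 / \<rho>\<^sup>2)"
    using rho_pos by (auto simp: zmin_def zmax_def field_simps power2_eq_square)
  moreover have "a * (1 - a) * (1 / \<rho>) < a * (1 - a) * (1 / \<rho>\<^sup>2)"
    using a_pos a_lt1 rho_pos rho_lt1
    by (intro mult_strict_left_mono) (auto simp: field_simps power2_eq_square)
  ultimately have "0 < hull_gap u v"
    by linarith
  then show False
    using assms(1) unfolding hull_feasible_def by simp
qed

text \<open>A slack in \<open>E[Z\<^sup>2] \<le> E[SZ]\<close> could be spent on spreading one of the two conditional
  laws off the chord (they cannot both lie on it), which strictly increases the value.\<close>

lemma hull_gap_eq_zero:
  assumes feas: "hull_feasible u v" and max: "hull_max \<le> hull_value u v"
  shows "hull_gap u v = 0"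
proof (rule ccontr)
  assume "hull_gap u v \<noteq> 0"
  then have neg: "hull_gap u v < 0"
    using feas unfolding hull_feasible_def by simp
  have u: "u \<in> moment_hull" and v: "v \<in> moment_hull"
    and mean: "(1 - a) * fst u + a * fst v = 0"
    using feas unfolding hull_feasible_def by auto
  consider "fst (snd u) \<noteq> (zmin + zmax) * fst u - zmin * zmax"
    | "fst (snd v) \<noteq> (zmin + zmax) * fst v - zmin * zmax"
    using hull_chord_infeasible[OF feas] by blast
  then show False
  proof cases
    case 1
    have "0 < - hull_gap u v / (1 - a)"
      using neg a_lt1 by (intro divide_pos_pos) auto
    then obtain u' where u': "u' \<in> moment_hull" "fst u' = fst u"
      "fst (snd u') \<le> fst (snd u) + - hull_gap u v / (1 - a)" "snd (snd u) < snd (snd u')"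
      using moment_hull_raise[OF u 1] by blast
    have "hull_gap u' v = hull_gap u v + (1 - a) * (fst (snd u') - fst (snd u))"
      using u'(2) by (simp add: hull_gap_def algebra_simps)
    also have "\<dots> \<le> 0"
      using u'(3) a_lt1 by (simp add: field_simps)
    finally have "hull_feasible u' v"
      using u'(1,2) v mean unfolding hull_feasible_def by simp
    moreover have "hull_value u v < hull_value u' v"
      using u'(4) a_lt1 by (simp add: hull_value_def)
    ultimately show False
      using hull_value_le_max max by fastforce
  next
    case 2
    have "0 < - hull_gap u v / a"
      using neg a_pos by (intro divide_pos_pos) auto
    then obtain v' where v': "v' \<in> moment_hull" "fst v' = fst v"
      "fst (snd v') \<le> fst (snd v) + - hull_gap u v / a" "snd (snd v) < snd (snd v')"
      using moment_hull_raise[OF v 2] by blast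
    have "hull_gap u v' = hull_gap u v + a * (fst (snd v') - fst (snd v))"
      using v'(2) by (simp add: hull_gap_def algebra_simps)
    also have "\<dots> \<le> 0"
      using v'(3) a_pos by (simp add: field_simps)
    finally have "hull_feasible u v'"
      using v'(1,2) u mean unfolding hull_feasible_def by simp
    moreover have "hull_value u v < hull_value u v'"
      using v'(4) a_pos by (simp add: hull_value_def)
    ultimately show False
      using hull_value_le_max max by fastforce
  qed
qed

lemma hull_max_not_interior:
  assumes feas: "hull_feasible u v" and max: "hull_value u v = hull_max"
  shows "u \<notin> interior moment_hull" "v \<notin> interior moment_hull"
proof -
  have raise: "\<exists>e>0. (fst x, fst (snd x), snd (snd x) + e) \<in> moment_hull"
    if x_int: "x \<in> interior moment_hull" for x
  proof -
    obtain e where e: "0 < e" "ball x e \<subseteq> moment_hull"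
      using x_int unfolding mem_interior by blast
    obtain x1 x2 x3 where x: "x = (x1, x2, x3)"
      by (cases x) auto
    have "dist x (x1, x2, x3 + e / 2) < e"
      using e(1) by (simp add: x dist_Pair_Pair dist_real_def)
    then show ?thesis
      using e by (intro exI[of _ "e / 2"]) (auto simp: x)
  qed
  show "u \<notin> interior moment_hull"
  proof
    assume "u \<in> interior moment_hull"
    then obtain e where "0 < e" and "(fst u, fst (snd u), snd (snd u) + e) \<in> moment_hull" (is "?u \<in> _")
      using raise by blast
    moreover have "hull_feasible ?u v"
      using feas \<open>?u \<in> moment_hull\<close> by (simp add: hull_feasible_def hull_gap_def)
    moreover have "0 < (1 - a) * e"
      using a_lt1 \<open>0 < e\<close> by simp
    ultimately show False
      using hull_value_le_max[of ?u v] max by (simp add: hull_value_def distrib_left)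
  qed
  show "v \<notin> interior moment_hull"
  proof
    assume "v \<in> interior moment_hull"
    then obtain e where "0 < e" and "(fst v, fst (snd v), snd (snd v) + e) \<in> moment_hull" (is "?v \<in> _")
      using raise by blast
    moreover have "hull_feasible u ?v"
      using feas \<open>?v \<in> moment_hull\<close> by (simp add: hull_feasible_def hull_gap_def)
    moreover have "0 < a * e"
      using a_pos \<open>0 < e\<close> by simp
    ultimately show False
      using hull_value_le_max[of u ?v] max by (simp add: hull_value_def distrib_left)
  qed
qed

text \<open>By Caratheodory's theorem on the supporting plane, a boundary point of the hull
  is a mixture of at most three points of the curve, and hence of any \<open>m \<ge> 3\<close>.\<close>

lemma moment_hull_boundary_slots:
  fixes m :: nat
  assumes u: "u \<in> moment_hull" "u \<notin> interior moment_hull" and m: "3 \<le> m"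
  obtains w z where "\<And>i. i \<in> {1..m} \<Longrightarrow> 0 < w i \<and> z i \<in> {zmin..zmax}" "sum w {1..m} = 1"
    "u = (\<Sum>i\<in>{1..m}. w i *\<^sub>R moment_point (z i))"
proof -
  obtain S where S: "finite S" "S \<subseteq> moment_point ` {zmin..zmax}"
    "card S \<le> DIM(real \<times> real \<times> real)" "u \<in> convex hull S"
    using caratheodory_not_interior[OF compact_moment_curve u[unfolded moment_hull_def]] by blast
  obtain w x where wx: "\<And>i. i \<in> {1..m} \<Longrightarrow> 0 < w i \<and> x i \<in> S" "sum w {1..m} = 1"
    "u = (\<Sum>i\<in>{1..m}. w i *\<^sub>R x i)"
    using convex_hull_finite_positive_weights[OF S(1) _ S(4), of m] S(3) m by auto
  have "x i = moment_point (fst (x i)) \<and> fst (x i) \<in> {zmin..zmax}" if "i \<in> {1..m}" for i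
    using wx(1)[OF that] S(2) by auto
  then show ?thesis
    using that[of w "\<lambda>i. fst (x i)"] wx by simp
qed

lemma lam_feasibleD:
  assumes "lam_feasible a \<rho> m z p" "s \<in> Sset a" "i \<in> {1..m}"
  shows "z s i \<in> {zmin..zmax}" "0 < p s i"
  using assms unfolding lam_feasible_def range_iff by auto

lemma PS_pos: "s \<in> Sset a \<Longrightarrow> 0 < PS a s"
  using a_pos a_lt1 by (auto simp: Sset_def PS_def)

definition cond_moments ::
  "nat \<Rightarrow> (real \<Rightarrow> nat \<Rightarrow> real) \<Rightarrow> (real \<Rightarrow> nat \<Rightarrow> real) \<Rightarrow> real \<Rightarrow> real \<times> real \<times> real" where
  "cond_moments m z p s = (\<Sum>i\<in>{1..m}. (p s i / PS a s) *\<^sub>R moment_point (z s i))"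

lemma cond_moments_components:
  assumes "s \<in> Sset a"
  shows "PS a s * fst (cond_moments m z p s) = (\<Sum>i\<in>{1..m}. p s i * z s i)"
    "PS a s * fst (snd (cond_moments m z p s)) = (\<Sum>i\<in>{1..m}. p s i * (z s i)\<^sup>2)"
    "PS a s * snd (snd (cond_moments m z p s)) = (\<Sum>i\<in>{1..m}. p s i * \<phi> (z s i))"
  using PS_pos[OF assms] unfolding cond_moments_def sum_scaleR_triple_components
  by (simp_all add: sum_distrib_left)

lemma cond_moments_in_hull:
  assumes "lam_feasible a \<rho> m z p" "s \<in> Sset a"
  shows "cond_moments m z p s \<in> moment_hull"
  unfolding cond_moments_def
proof (rule convex_sum[OF finite_atLeastAtMost convex_moment_hull])
  show "(\<Sum>i\<in>{1..m}. p s i / PS a s) = 1"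
    using assms PS_pos[OF assms(2)] unfolding lam_feasible_def by (simp flip: sum_divide_distrib)
  show "0 \<le> p s i / PS a s" and "moment_point (z s i) \<in> moment_hull" if "i \<in> {1..m}" for i
    using lam_feasibleD[OF assms that] PS_pos[OF assms(2)] moment_point_in_hull by auto
qed

lemma cond_moments_problem:
  fixes m :: nat and z p :: "real \<Rightarrow> nat \<Rightarrow> real"
  defines "u \<equiv> cond_moments m z p (-a)" and "v \<equiv> cond_moments m z p (1 - a)"
  shows "(1 - a) * fst u + a * fst v = (\<Sum>s\<in>Sset a. \<Sum>i\<in>{1..m}. p s i * z s i)"
    "hull_gap u v = lam_gap a m z p" "hull_value u v = lam_obj \<Phi> a \<rho> m z p"
proof -
  have S: "-a \<in> Sset a" "1 - a \<in> Sset a"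
    by (auto simp: Sset_def)
  note cu = cond_moments_components[OF S(1), of m z p, unfolded PS_minus, folded u_def]
  note cv = cond_moments_components[OF S(2), of m z p, unfolded PS_plus, folded v_def]
  show "(1 - a) * fst u + a * fst v = (\<Sum>s\<in>Sset a. \<Sum>i\<in>{1..m}. p s i * z s i)"
    unfolding cu cv sum_Sset ..
  have "hull_gap u v = (1 - a) * fst (snd u) + a * ((1 - a) * fst u)
      + (a * fst (snd v) - (1 - a) * (a * fst v))"
    unfolding hull_gap_def by (simp add: algebra_simps)
  also have "\<dots> = lam_gap a m z p"
    unfolding cu cv lam_gap_def sum_Sset
    by (simp add: algebra_simps sum.distrib sum_subtractf sum_distrib_left)
  finally show "hull_gap u v = lam_gap a m z p" .
  show "hull_value u v = lam_obj \<Phi> a \<rho> m z p"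
    unfolding hull_value_def lam_obj_def sum_Sset cu(3) cv(3) by (simp add: \<phi>_def)
qed

lemma lam_feasible_hull:
  assumes feas: "lam_feasible a \<rho> m z p"
  shows "hull_feasible (cond_moments m z p (-a)) (cond_moments m z p (1 - a))"
  using cond_moments_problem[of m z p] cond_moments_in_hull[OF feas] feas
  unfolding hull_feasible_def lam_feasible_def lam_gap_def by (simp add: Sset_def)

lemma lam_obj_le_hull_max: "lam_feasible a \<rho> m z p \<Longrightarrow> lam_obj \<Phi> a \<rho> m z p \<le> hull_max"
  using lam_feasible_hull cond_moments_problem(3) hull_value_le_max by metis

lemma lam_attains_hull_max:
  fixes m :: nat
  assumes m: "3 \<le> m"
  obtains z p where "lam_feasible a \<rho> m z p" "lam_obj \<Phi> a \<rho> m z p = hull_max"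
proof -
  obtain u v where uv: "hull_feasible u v" "hull_value u v = hull_max"
    using hull_max_attained by blast
  have hull: "u \<in> moment_hull" "v \<in> moment_hull"
    using uv(1) unfolding hull_feasible_def by auto
  obtain w1 z1 where r1: "\<And>i. i \<in> {1..m} \<Longrightarrow> 0 < w1 i \<and> z1 i \<in> {zmin..zmax}"
      "sum w1 {1..m} = 1" "u = (\<Sum>i\<in>{1..m}. w1 i *\<^sub>R moment_point (z1 i))"
    using moment_hull_boundary_slots[OF hull(1) hull_max_not_interior(1)[OF uv] m] by blast
  obtain w2 z2 where r2: "\<And>i. i \<in> {1..m} \<Longrightarrow> 0 < w2 i \<and> z2 i \<in> {zmin..zmax}"
      "sum w2 {1..m} = 1" "v = (\<Sum>i\<in>{1..m}. w2 i *\<^sub>R moment_point (z2 i))"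
    using moment_hull_boundary_slots[OF hull(2) hull_max_not_interior(2)[OF uv] m] by blast
  define z where "z s i = (if s = -a then z1 i else z2 i)" for s i
  define p where "p s i = PS a s * (if s = -a then w1 i else w2 i)" for s i
  have "cond_moments m z p (-a) = u" "cond_moments m z p (1 - a) = v"
    using PS_pos[of "-a"] PS_pos[of "1 - a"] r1(3) r2(3)
    by (simp_all add: cond_moments_def z_def p_def Sset_def)
  note uv_problem = cond_moments_problem[of m z p, unfolded this]
  have "\<forall>s\<in>Sset a. \<forall>i\<in>{1..m}. 0 \<le> a + \<rho> * z s i \<and> a + \<rho> * z s i \<le> 1 \<and> 0 < p s i"
  proof (intro ballI)
    fix s i assume "s \<in> Sset a" "i \<in> {1..m}"
    then have "z s i \<in> {zmin..zmax}" "0 < p s i"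
      using r1(1) r2(1) PS_pos by (auto simp: z_def p_def)
    then show "0 \<le> a + \<rho> * z s i \<and> a + \<rho> * z s i \<le> 1 \<and> 0 < p s i"
      unfolding range_iff by blast
  qed
  moreover have "\<forall>s\<in>Sset a. (\<Sum>i\<in>{1..m}. p s i) = PS a s"
    using r1(2) r2(2) by (simp add: p_def Sset_def flip: sum_distrib_left)
  ultimately have "lam_feasible a \<rho> m z p"
    using uv(1) uv_problem(1,2) unfolding hull_feasible_def lam_feasible_def lam_gap_def by simp
  moreover have "lam_obj \<Phi> a \<rho> m z p = hull_max"
    using uv(2) uv_problem(3) by simp
  ultimately show ?thesis
    using that by blast
qed

definition lam_cond_law :: "nat \<Rightarrow> (real \<Rightarrow> nat \<Rightarrow> real) \<Rightarrow> (real \<Rightarrow> nat \<Rightarrow> real) \<Rightarrow> real \<Rightarrow> real pmf" where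
  "lam_cond_law m z p s = map_pmf (z s) (embed_pmf (\<lambda>i. if i \<in> {1..m} then p s i / PS a s else 0))"

lemma lam_cond_law_set_expectation:
  assumes feas: "lam_feasible a \<rho> m z p" and s: "s \<in> Sset a"
  shows "set_pmf (lam_cond_law m z p s) \<subseteq> z s ` {1..m}"
    "measure_pmf.expectation (lam_cond_law m z p s) g = (\<Sum>i\<in>{1..m}. (p s i / PS a s) * g (z s i))"
proof -
  define f where "f i = (if i \<in> {1..m} then p s i / PS a s else 0)" for i
  have f_nonneg: "0 \<le> f i" for i
    using lam_feasibleD(2)[OF feas s] PS_pos[OF s] by (auto simp: f_def less_imp_le)
  have "(\<integral>\<^sup>+i. ennreal (f i) \<partial>count_space UNIV) = (\<Sum>i\<in>{1..m}. ennreal (f i))"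
    by (rule nn_integral_count_space') (auto simp: f_def)
  also have "\<dots> = ennreal (\<Sum>i\<in>{1..m}. f i)"
    using f_nonneg by simp
  also have "(\<Sum>i\<in>{1..m}. f i) = 1"
    using feas s PS_pos[OF s] unfolding lam_feasible_def f_def by (simp flip: sum_divide_distrib)
  finally have f_prob: "(\<integral>\<^sup>+i. ennreal (f i) \<partial>count_space UNIV) = 1"
    by simp
  have law: "lam_cond_law m z p s = map_pmf (z s) (embed_pmf f)"
    unfolding lam_cond_law_def f_def ..
  have supp: "set_pmf (embed_pmf f) \<subseteq> {1..m}"
    using set_embed_pmf[OF f_nonneg f_prob] unfolding f_def by auto
  then show "set_pmf (lam_cond_law m z p s) \<subseteq> z s ` {1..m}"
    unfolding law by auto
  have "measure_pmf.expectation (lam_cond_law m z p s) g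
      = measure_pmf.expectation (embed_pmf f) (\<lambda>i. g (z s i))"
    unfolding law by simp
  also have "\<dots> = (\<Sum>i\<in>{1..m}. g (z s i) * pmf (embed_pmf f) i)"
    by (rule integral_measure_pmf_real) (use supp in auto)
  also have "\<dots> = (\<Sum>i\<in>{1..m}. (p s i / PS a s) * g (z s i))"
    by (rule sum.cong) (auto simp: pmf_embed_pmf[OF f_nonneg f_prob] f_def)
  finally show "measure_pmf.expectation (lam_cond_law m z p s) g
      = (\<Sum>i\<in>{1..m}. (p s i / PS a s) * g (z s i))" .
qed

lemma jointE_lam_cond_law:
  assumes "lam_feasible a \<rho> m z p"
  shows "jointE a (lam_cond_law m z p) f = (\<Sum>s\<in>Sset a. \<Sum>i\<in>{1..m}. p s i * f s (z s i))"
  unfolding jointE_def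
proof (rule sum.cong[OF refl])
  fix s assume s: "s \<in> Sset a"
  show "PS a s * measure_pmf.expectation (lam_cond_law m z p s) (f s) = (\<Sum>i\<in>{1..m}. p s i * f s (z s i))"
    unfolding lam_cond_law_set_expectation(2)[OF assms s] sum_distrib_left using PS_pos[OF s] by (intro sum.cong) auto
qed

lemma lam_feasible_gamma:
  assumes feas: "lam_feasible a \<rho> m z p"
  shows "gamma_feasible a \<rho> (lam_cond_law m z p)"
    "gamma_obj \<Phi> a \<rho> (lam_cond_law m z p) = lam_obj \<Phi> a \<rho> m z p"
proof -
  show "gamma_obj \<Phi> a \<rho> (lam_cond_law m z p) = lam_obj \<Phi> a \<rho> m z p"
    unfolding gamma_obj_def lam_obj_def jointE_lam_cond_law[OF feas] ..
  have "\<forall>s\<in>Sset a. \<forall>x\<in>set_pmf (lam_cond_law m z p s). 0 \<le> a + \<rho> * x \<and> a + \<rho> * x \<le> 1"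
    using lam_cond_law_set_expectation(1)[OF feas] feas unfolding lam_feasible_def by fastforce
  moreover have "jointE a (lam_cond_law m z p) (\<lambda>s z. z\<^sup>2) - jointE a (lam_cond_law m z p) (\<lambda>s z. s * z)
      = lam_gap a m z p"
    unfolding jointE_lam_cond_law[OF feas] lam_gap_def by (simp add: sum_subtractf right_diff_distrib)
  ultimately show "gamma_feasible a \<rho> (lam_cond_law m z p)"
    using feas unfolding gamma_feasible_def jointE_lam_cond_law[OF feas] lam_feasible_def lam_gap_def
    by auto
qed

definition pmf_moments :: "real pmf \<Rightarrow> real \<times> real \<times> real" where
  "pmf_moments P = (measure_pmf.expectation P (\<lambda>z. z), measure_pmf.expectation P (\<lambda>z. z\<^sup>2),
     measure_pmf.expectation P \<phi>)"

text \<open>A point outside the closed convex hull would be separated from it by an affine function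
  of \<open>(z, z\<^sup>2, \<phi> z)\<close>, whose expectation cannot lie below its minimum over the curve.\<close>

lemma pmf_moments_in_hull:
  assumes supp: "set_pmf P \<subseteq> {zmin..zmax}"
  shows "pmf_moments P \<in> moment_hull"
proof (rule ccontr)
  assume "pmf_moments P \<notin> moment_hull"
  then obtain c b where cb: "c \<bullet> pmf_moments P < b" "\<forall>x\<in>moment_hull. b < c \<bullet> x"
    using separating_hyperplane_closed_point[OF convex_moment_hull
        compact_imp_closed[OF compact_moment_hull]] by blast
  obtain c1 c2 c3 where c: "c = (c1, c2, c3)"
    by (cases c) auto
  have integrable: "integrable (measure_pmf P) (\<lambda>z. z)" "integrable (measure_pmf P) (\<lambda>z. z\<^sup>2)"
    "integrable (measure_pmf P) \<phi>"
    using supp \<phi>_continuous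
    by (auto intro!: integrable_measure_pmf_continuous_on[of "{zmin..zmax}"] continuous_intros)
  have "b \<le> measure_pmf.expectation P (\<lambda>z. c1 * z + c2 * z\<^sup>2 + c3 * \<phi> z)"
  proof (rule measure_pmf.integral_ge_const)
    show "integrable (measure_pmf P) (\<lambda>z. c1 * z + c2 * z\<^sup>2 + c3 * \<phi> z)"
      using integrable by simp
    show "AE x in measure_pmf P. b \<le> c1 * x + c2 * x\<^sup>2 + c3 * \<phi> x"
      unfolding AE_measure_pmf_iff
      using cb(2) moment_point_in_hull supp by (force simp: c moment_point_def less_imp_le)
  qed
  also have "\<dots> = c \<bullet> pmf_moments P"
    unfolding c pmf_moments_def using integrable by simp
  finally show False
    using cb(1) by simp
qed

lemma gamma_feasible_hull:
  assumes feas: "gamma_feasible a \<rho> Q"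
  defines "u \<equiv> pmf_moments (Q (-a))" and "v \<equiv> pmf_moments (Q (1 - a))"
  shows "hull_feasible u v" "hull_value u v = gamma_obj \<Phi> a \<rho> Q"
    "hull_gap u v = jointE a Q (\<lambda>s z. z\<^sup>2) - jointE a Q (\<lambda>s z. s * z)"
proof -
  have supp: "set_pmf (Q s) \<subseteq> {zmin..zmax}" if "s \<in> Sset a" for s
    using feas that unfolding gamma_feasible_def subset_iff range_iff by blast
  show gap: "hull_gap u v = jointE a Q (\<lambda>s z. z\<^sup>2) - jointE a Q (\<lambda>s z. s * z)"
    unfolding u_def v_def hull_gap_def pmf_moments_def jointE_def sum_Sset PS_minus PS_plus
    by (simp add: algebra_simps)
  show "hull_value u v = gamma_obj \<Phi> a \<rho> Q"
    unfolding u_def v_def hull_value_def pmf_moments_def gamma_obj_def jointE_def sum_Sset PS_minus PS_plus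
    by (simp add: \<phi>_def[abs_def])
  have "(1 - a) * fst u + a * fst v = jointE a Q (\<lambda>s z. z)"
    unfolding u_def v_def pmf_moments_def jointE_def sum_Sset PS_minus PS_plus by simp
  then show "hull_feasible u v"
    using pmf_moments_in_hull supp gap feas unfolding hull_feasible_def gamma_feasible_def u_def v_def
    by (simp add: Sset_def)
qed

lemma gamma_obj_le_hull_max: "gamma_feasible a \<rho> Q \<Longrightarrow> gamma_obj \<Phi> a \<rho> Q \<le> hull_max"
  using gamma_feasible_hull hull_value_le_max by metis

lemma Lambda_eq_hull_max:
  assumes "3 \<le> m"
  shows "Lambda \<Phi> a \<rho> m = hull_max"
proof -
  obtain z p where "lam_feasible a \<rho> m z p" "lam_obj \<Phi> a \<rho> m z p = hull_max"
    using lam_attains_hull_max[OF assms] .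
  then show ?thesis
    unfolding Lambda_def using lam_obj_le_hull_max
    by (intro cSup_eq_maximum) (metis (mono_tags, lifting) mem_Collect_eq, blast)
qed

lemma Gamma_eq_hull_max: "Gamma \<Phi> a \<rho> = hull_max"
proof -
  obtain z p where "lam_feasible a \<rho> 3 z p" "lam_obj \<Phi> a \<rho> 3 z p = hull_max"
    using lam_attains_hull_max[of 3] by blast
  then have "gamma_feasible a \<rho> (lam_cond_law 3 z p)" "gamma_obj \<Phi> a \<rho> (lam_cond_law 3 z p) = hull_max"
    using lam_feasible_gamma by auto
  then show ?thesis
    unfolding Gamma_def using gamma_obj_le_hull_max
    by (intro cSup_eq_maximum) (metis (mono_tags, lifting) mem_Collect_eq, blast)
qed

lemma lam_optimal_exists: "3 \<le> m \<Longrightarrow> \<exists>z p. lam_optimal \<Phi> a \<rho> m z p"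
  using lam_attains_hull_max lam_obj_le_hull_max unfolding lam_optimal_def by metis

lemma lam_optimal_obj:
  assumes "3 \<le> m" "lam_optimal \<Phi> a \<rho> m z p"
  shows "lam_obj \<Phi> a \<rho> m z p = hull_max"
  using lam_attains_hull_max[OF assms(1)] assms(2) lam_obj_le_hull_max
  unfolding lam_optimal_def by (metis order_antisym)

lemma gamma_optimal_obj:
  assumes "gamma_optimal \<Phi> a \<rho> Q"
  shows "gamma_obj \<Phi> a \<rho> Q = hull_max"
  using lam_attains_hull_max[of 3] lam_feasible_gamma assms gamma_obj_le_hull_max
  unfolding gamma_optimal_def by (metis order_antisym order_refl numeral_le_iff)

lemma gamma_optimal_tight:
  assumes "gamma_optimal \<Phi> a \<rho> Q"
  shows "jointE a Q (\<lambda>s z. z\<^sup>2) = jointE a Q (\<lambda>s z. s * z)"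
  using gamma_feasible_hull[of Q] hull_gap_eq_zero gamma_optimal_obj[OF assms] assms
  unfolding gamma_optimal_def by (metis eq_iff_diff_eq_0 order_refl)

lemma lam_optimal_tight:
  assumes "3 \<le> m" "lam_optimal \<Phi> a \<rho> m z p"
  shows "lam_gap a m z p = 0"
  using lam_feasible_hull[of m z p] cond_moments_problem[of m z p] hull_gap_eq_zero
    lam_optimal_obj[OF assms] assms(2)
  unfolding lam_optimal_def by (metis order_refl)

text \<open>If all atoms given \<open>S = -a\<close> sat at \<open>zmin\<close>, or all atoms given \<open>S = 1 - a\<close> at \<open>zmax\<close>,
  the mean constraint would force the other conditional to its endpoint too; both would then lie
  on the chord, which is infeasible.\<close>

lemma lam_feasible_interior_atoms:
  assumes feas: "lam_feasible a \<rho> m z p"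
  shows "\<exists>i\<in>{1..m}. zmin < z (-a) i" "\<exists>j\<in>{1..m}. z (1 - a) j < zmax"
proof -
  define u where "u = cond_moments m z p (-a)"
  define v where "v = cond_moments m z p (1 - a)"
  have S: "-a \<in> Sset a" "1 - a \<in> Sset a"
    by (auto simp: Sset_def)
  have hf: "hull_feasible u v"
    using lam_feasible_hull[OF feas] unfolding u_def v_def .
  then have mean: "(1 - a) * fst u + a * fst v = 0" and hull: "u \<in> moment_hull" "v \<in> moment_hull"
    unfolding hull_feasible_def by auto
  have "(1 - a) * zmin + a * zmax = 0"
    using rho_pos by (simp add: zmin_def zmax_def field_simps)
  then have "fst u = zmin \<longleftrightarrow> fst v = zmax"
    using mean a_pos a_lt1 by (smt (verit) mult_cancel_left)
  then have not_ends: "fst u \<noteq> zmin" "fst v \<noteq> zmax"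
    using hull_chord_infeasible[OF hf] moment_hull_endpoint_on_chord[OF hull(1)]
      moment_hull_endpoint_on_chord[OF hull(2)] by auto
  have fst_cond: "PS a s * fst (cond_moments m z p s) = (\<Sum>i\<in>{1..m}. p s i) * c"
    if "s \<in> Sset a" "\<forall>i\<in>{1..m}. z s i = c" for s c
    using that by (simp add: cond_moments_components(1) sum_distrib_right)
  show "\<exists>i\<in>{1..m}. zmin < z (-a) i"
  proof (rule ccontr)
    assume "\<not> ?thesis"
    then have "\<forall>i\<in>{1..m}. z (-a) i = zmin"
      using lam_feasibleD(1)[OF feas S(1)] by (meson atLeastAtMost_iff not_le order_antisym)
    then have "fst u = zmin"
      using fst_cond[OF S(1)] feas S(1) PS_pos[OF S(1)] unfolding u_def lam_feasible_def by auto
    then show False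
      using not_ends by simp
  qed
  show "\<exists>j\<in>{1..m}. z (1 - a) j < zmax"
  proof (rule ccontr)
    assume "\<not> ?thesis"
    then have "\<forall>j\<in>{1..m}. z (1 - a) j = zmax"
      using lam_feasibleD(1)[OF feas S(2)] by (meson atLeastAtMost_iff not_le order_antisym)
    then have "fst v = zmax"
      using fst_cond[OF S(2)] feas S(2) PS_pos[OF S(2)] unfolding v_def lam_feasible_def by auto
    then show False
      using not_ends by simp
  qed
qed

lemma cond_moments_move_mass:
  assumes feas: "lam_feasible a \<rho> m z p" and s: "s \<in> Sset a" and i: "i \<in> {1..m}"
    and t: "0 \<le> t" "t \<le> p s i" and y: "y \<in> {zmin..zmax}"
  shows "cond_moments m z p s + (t / PS a s) *\<^sub>R (moment_point y - moment_point (z s i)) \<in> moment_hull"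
proof -
  have p: "0 < p s i" and zi: "z s i \<in> {zmin..zmax}"
    using lam_feasibleD[OF feas s i] by auto
  define Y where "Y = (1 - t / p s i) *\<^sub>R moment_point (z s i) + (t / p s i) *\<^sub>R moment_point y"
  have "Y \<in> moment_hull"
    unfolding Y_def using convex_moment_hull[unfolded convex_def] moment_point_in_hull zi y t p
    by simp
  have "cond_moments m z p s + (p s i / PS a s) *\<^sub>R (Y - moment_point (z s i)) \<in> moment_hull"
    unfolding cond_moments_def
  proof (rule convex_sum_replace[OF convex_moment_hull finite_atLeastAtMost[of 1 m] _ _ _ i \<open>Y \<in> moment_hull\<close>])
    show "(\<Sum>i\<in>{1..m}. p s i / PS a s) = 1"
      using feas s PS_pos[OF s] unfolding lam_feasible_def by (simp flip: sum_divide_distrib)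
    show "0 \<le> p s j / PS a s" and "moment_point (z s j) \<in> moment_hull" if "j \<in> {1..m}" for j
      using lam_feasibleD[OF feas s that] PS_pos[OF s] moment_point_in_hull by auto
  qed
  moreover have "(p s i / PS a s) *\<^sub>R (Y - moment_point (z s i))
      = (t / PS a s) *\<^sub>R (moment_point y - moment_point (z s i))"
    using p by (simp add: Y_def algebra_simps)
  ultimately show ?thesis
    by simp
qed

text \<open>If an atom of the law given \<open>S = -a\<close> lay above an atom of the law given \<open>S = 1 - a\<close>,
  exchanging a little mass between the two conditionals would keep the mean and the value and
  make \<open>E[Z\<^sup>2] - E[SZ]\<close> negative, contradicting tightness.\<close>

lemma lam_optimal_sorted:
  assumes m: "3 \<le> m" and opt: "lam_optimal \<Phi> a \<rho> m z p" and i: "i \<in> {1..m}" and j: "j \<in> {1..m}"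
  shows "z (-a) i \<le> z (1 - a) j"
proof (rule ccontr)
  define x where "x = z (-a) i"
  define y where "y = z (1 - a) j"
  assume "\<not> z (-a) i \<le> z (1 - a) j"
  then have yx: "y < x"
    by (simp add: x_def y_def)
  have feas: "lam_feasible a \<rho> m z p"
    using opt unfolding lam_optimal_def by blast
  have S: "-a \<in> Sset a" "1 - a \<in> Sset a"
    by (auto simp: Sset_def)
  define t where "t = min (p (-a) i) (p (1 - a) j)"
  have t: "0 < t" "t \<le> p (-a) i" "t \<le> p (1 - a) j"
    using lam_feasibleD(2)[OF feas S(1) i] lam_feasibleD(2)[OF feas S(2) j] by (auto simp: t_def)
  define u where "u = cond_moments m z p (-a)"
  define v where "v = cond_moments m z p (1 - a)"
  define D where "D = moment_point y - moment_point x"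
  define cu where "cu = t / (1 - a)"
  define cv where "cv = t / a"
  have c: "(1 - a) * cu = t" "a * cv = t"
    using a_pos a_lt1 by (simp_all add: cu_def cv_def)
  define u' where "u' = u + cu *\<^sub>R D"
  define v' where "v' = v - cv *\<^sub>R D"
  have "u' \<in> moment_hull"
    using cond_moments_move_mass[OF feas S(1) i less_imp_le[OF t(1)] t(2) lam_feasibleD(1)[OF feas S(2) j]]
    by (simp add: u'_def u_def D_def x_def y_def cu_def PS_minus)
  moreover have "v' \<in> moment_hull"
    using cond_moments_move_mass[OF feas S(2) j less_imp_le[OF t(1)] t(3) lam_feasibleD(1)[OF feas S(1) i]]
    by (simp add: v'_def v_def D_def x_def y_def cv_def PS_plus algebra_simps)
  moreover have "(1 - a) * fst u' + a * fst v'
      = (1 - a) * fst u + a * fst v + ((1 - a) * cu) * (y - x) - (a * cv) * (y - x)"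
    by (simp add: u'_def v'_def D_def algebra_simps)
  moreover have "hull_gap u' v' = hull_gap u v + ((1 - a) * cu) * ((y\<^sup>2 - x\<^sup>2) + a * (y - x))
      - (a * cv) * ((y\<^sup>2 - x\<^sup>2) - (1 - a) * (y - x))"
    by (simp add: u'_def v'_def D_def hull_gap_def algebra_simps)
  moreover have "hull_value u' v' = hull_value u v + ((1 - a) * cu) * (\<phi> y - \<phi> x) - (a * cv) * (\<phi> y - \<phi> x)"
    by (simp add: u'_def v'_def D_def hull_value_def algebra_simps)
  moreover have "hull_feasible u v" "hull_value u v = hull_max" "hull_gap u v = 0"
    using lam_feasible_hull[OF feas] cond_moments_problem[of m z p] lam_optimal_obj[OF m opt]
      lam_optimal_tight[OF m opt]
    by (simp_all add: u_def v_def)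
  moreover have "t * (y - x) < 0"
    using t(1) yx by (simp add: mult_pos_neg)
  ultimately show False
    using hull_gap_eq_zero[of u' v'] unfolding hull_feasible_def c by (auto simp: algebra_simps)
qed

definition move_pair ::
  "(real \<Rightarrow> nat \<Rightarrow> real) \<Rightarrow> nat \<Rightarrow> real \<Rightarrow> nat \<Rightarrow> real \<Rightarrow> real \<Rightarrow> nat \<Rightarrow> real" where
  "move_pair z i x' j y' s k = (if s = -a \<and> k = i then x' else if s = 1 - a \<and> k = j then y' else z s k)"

lemma sum_move_pair:
  fixes G :: "real \<Rightarrow> nat \<Rightarrow> real \<Rightarrow> real"
  assumes i: "i \<in> {1..m}" and j: "j \<in> {1..m}"
  shows "(\<Sum>s\<in>Sset a. \<Sum>k\<in>{1..m}. G s k (move_pair z i x' j y' s k))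
    = (\<Sum>s\<in>Sset a. \<Sum>k\<in>{1..m}. G s k (z s k))
      - G (-a) i (z (-a) i) + G (-a) i x' - G (1 - a) j (z (1 - a) j) + G (1 - a) j y'"
proof -
  have "(\<Sum>k\<in>{1..m}. G (-a) k (move_pair z i x' j y' (-a) k))
      = (\<Sum>k\<in>{1..m}. if k = i then G (-a) i x' else G (-a) k (z (-a) k))"
    "(\<Sum>k\<in>{1..m}. G (1 - a) k (move_pair z i x' j y' (1 - a) k))
      = (\<Sum>k\<in>{1..m}. if k = j then G (1 - a) j y' else G (1 - a) k (z (1 - a) k))"
    by (auto simp: move_pair_def intro!: sum.cong)
  then show ?thesis
    unfolding sum_Sset
    using sum_update[OF finite_atLeastAtMost i, of "G (-a) i x'" "\<lambda>k. G (-a) k (z (-a) k)"]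
      sum_update[OF finite_atLeastAtMost j, of "G (1 - a) j y'" "\<lambda>k. G (1 - a) k (z (1 - a) k)"]
    by simp
qed

lemma lam_move_pair_apart:
  assumes feas: "lam_feasible a \<rho> m z p" and i: "i \<in> {1..m}" and j: "j \<in> {1..m}"
    and range: "x' \<in> {zmin..zmax}" "y' \<in> {zmin..zmax}"
    and apart: "x' \<le> z (-a) i" "z (-a) i \<le> z (1 - a) j" "z (1 - a) j \<le> y'"
    and mean: "p (-a) i * x' + p (1 - a) j * y' = p (-a) i * z (-a) i + p (1 - a) j * z (1 - a) j"
    and gap: "lam_gap a m (move_pair z i x' j y') p \<le> 0"
  shows "lam_feasible a \<rho> m (move_pair z i x' j y') p"
    "lam_obj \<Phi> a \<rho> m z p \<le> lam_obj \<Phi> a \<rho> m (move_pair z i x' j y') p"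
proof -
  have S: "-a \<in> Sset a" "1 - a \<in> Sset a"
    by (auto simp: Sset_def)
  show "lam_feasible a \<rho> m (move_pair z i x' j y') p"
    unfolding lam_feasible_def
  proof (intro conjI)
    show "\<forall>s\<in>Sset a. \<forall>k\<in>{1..m}. 0 \<le> a + \<rho> * move_pair z i x' j y' s k
        \<and> a + \<rho> * move_pair z i x' j y' s k \<le> 1 \<and> 0 < p s k"
      using lam_feasibleD[OF feas] range unfolding move_pair_def range_iff by auto
    show "\<forall>s\<in>Sset a. (\<Sum>k\<in>{1..m}. p s k) = PS a s"
      using feas unfolding lam_feasible_def by blast
    show "(\<Sum>s\<in>Sset a. \<Sum>k\<in>{1..m}. p s k * move_pair z i x' j y' s k) = 0"
      using sum_move_pair[OF i j, of "\<lambda>s k w. p s k * w"] mean feas unfolding lam_feasible_def by simp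
    show "(\<Sum>s\<in>Sset a. \<Sum>k\<in>{1..m}. p s k * ((move_pair z i x' j y' s k)\<^sup>2 - s * move_pair z i x' j y' s k)) \<le> 0"
      using gap unfolding lam_gap_def by simp
  qed
  have "p (-a) i * \<phi> (z (-a) i) + p (1 - a) j * \<phi> (z (1 - a) j) \<le> p (-a) i * \<phi> x' + p (1 - a) j * \<phi> y'"
    using convex_on_subset[OF \<phi>_convex, of "{x'..y'}"] range apart mean
      lam_feasibleD(2)[OF feas S(1) i] lam_feasibleD(2)[OF feas S(2) j]
    by (intro convex_on_two_point_spread) auto
  then show "lam_obj \<Phi> a \<rho> m z p \<le> lam_obj \<Phi> a \<rho> m (move_pair z i x' j y') p"
    using sum_move_pair[OF i j, of "\<lambda>s k w. p s k * \<Phi> (a + \<rho> * w)"] unfolding lam_obj_def \<phi>_def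
    by simp
qed

text \<open>If two interior atoms were closer than \<open>1/2\<close>, moving them apart by \<open>\<epsilon>/p\<close> and \<open>\<epsilon>/r\<close>
  would change \<open>E[Z\<^sup>2] - E[SZ]\<close> by \<open>\<epsilon> (\<epsilon> (1/p + 1/r) - (1 + 2x - 2y)) < 0\<close> for small \<open>\<epsilon>\<close>,
  contradicting tightness.\<close>

lemma lam_optimal_separated:
  assumes m: "3 \<le> m" and opt: "lam_optimal \<Phi> a \<rho> m z p" and i: "i \<in> {1..m}" and j: "j \<in> {1..m}"
    and interior: "zmin < z (-a) i" "z (1 - a) j < zmax"
  shows "z (-a) i + 1 / 2 \<le> z (1 - a) j"
proof (rule ccontr)
  define x where "x = z (-a) i"
  define y where "y = z (1 - a) j"
  assume "\<not> z (-a) i + 1 / 2 \<le> z (1 - a) j"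
  then have g: "0 < 1 + 2 * x - 2 * y"
    by (simp add: x_def y_def)
  have feas: "lam_feasible a \<rho> m z p"
    using opt unfolding lam_optimal_def by blast
  have S: "-a \<in> Sset a" "1 - a \<in> Sset a"
    by (auto simp: Sset_def)
  define pi where "pi = p (-a) i"
  define rj where "rj = p (1 - a) j"
  have pos: "0 < pi" "0 < rj"
    using lam_feasibleD(2)[OF feas S(1) i] lam_feasibleD(2)[OF feas S(2) j] by (simp_all add: pi_def rj_def)
  have xy: "x \<in> {zmin..zmax}" "y \<in> {zmin..zmax}"
    using lam_feasibleD(1)[OF feas S(1) i] lam_feasibleD(1)[OF feas S(2) j] by (simp_all add: x_def y_def)
  define c where "c = 1 / pi + 1 / rj"
  have c: "0 < c"
    using pos by (simp add: c_def add_pos_pos)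
  define \<epsilon> where "\<epsilon> = min (min (pi * (x - zmin)) (rj * (zmax - y))) ((1 + 2 * x - 2 * y) / (2 * c))"
  have "0 < \<epsilon>"
    using pos interior g c by (simp add: \<epsilon>_def x_def y_def)
  moreover have "\<epsilon> \<le> pi * (x - zmin)" "\<epsilon> \<le> rj * (zmax - y)" "\<epsilon> \<le> (1 + 2 * x - 2 * y) / (2 * c)"
    by (simp_all add: \<epsilon>_def)
  ultimately have \<epsilon>: "0 < \<epsilon>" "\<epsilon> / pi \<le> x - zmin" "\<epsilon> / rj \<le> zmax - y" "\<epsilon> * c < 1 + 2 * x - 2 * y"
    using pos c g by (simp_all add: pos_divide_le_eq pos_le_divide_eq mult.commute)
  define x' where "x' = x - \<epsilon> / pi"
  define y' where "y' = y + \<epsilon> / rj"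
  have x': "x' \<in> {zmin..zmax}" "x' \<le> x" and y': "y' \<in> {zmin..zmax}" "y \<le> y'"
    using \<epsilon> xy divide_pos_pos[OF \<epsilon>(1) pos(1)] divide_pos_pos[OF \<epsilon>(1) pos(2)]
    by (auto simp: x'_def y'_def)
  have "pi * (x'\<^sup>2 - (-a) * x') - pi * (x\<^sup>2 - (-a) * x) + rj * (y'\<^sup>2 - (1 - a) * y')
      - rj * (y\<^sup>2 - (1 - a) * y) = \<epsilon> * (\<epsilon> * c - (1 + 2 * x - 2 * y))"
    using pos by (simp add: x'_def y'_def c_def field_simps power2_eq_square)
  then have "lam_gap a m (move_pair z i x' j y') p = lam_gap a m z p + \<epsilon> * (\<epsilon> * c - (1 + 2 * x - 2 * y))"
    using sum_move_pair[OF i j, of "\<lambda>s k w. p s k * (w\<^sup>2 - s * w)"]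
    unfolding lam_gap_def pi_def rj_def x_def y_def by simp
  moreover have "\<epsilon> * (\<epsilon> * c - (1 + 2 * x - 2 * y)) < 0"
    using \<epsilon> by (simp add: mult_pos_neg)
  moreover have "lam_gap a m z p \<le> 0"
    using feas unfolding lam_feasible_def lam_gap_def by blast
  ultimately have gap: "lam_gap a m (move_pair z i x' j y') p < 0"
    by linarith
  have "pi * x' + rj * y' = pi * x + rj * y"
    using pos by (simp add: x'_def y'_def field_simps)
  then have "lam_feasible a \<rho> m (move_pair z i x' j y') p"
    "lam_obj \<Phi> a \<rho> m z p \<le> lam_obj \<Phi> a \<rho> m (move_pair z i x' j y') p"
    using lam_move_pair_apart[OF feas i j x'(1) y'(1)] x'(2) y'(2) lam_optimal_sorted[OF m opt i j] gap
    by (simp_all add: x_def y_def pi_def rj_def)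
  then show False
    using lam_feasible_hull[of m "move_pair z i x' j y'" p] cond_moments_problem[of m "move_pair z i x' j y'" p]
      hull_gap_eq_zero lam_optimal_obj[OF m opt] gap
    by fastforce
qed

end

lemma sum_sum_update:
  fixes g :: "'c \<Rightarrow> 'b \<Rightarrow> 'd \<Rightarrow> 'a::ab_group_add"
  assumes "finite S" "finite I" "s0 \<in> S" "i0 \<in> I"
  shows "(\<Sum>s\<in>S. \<Sum>i\<in>I. g s i (if s = s0 \<and> i = i0 then c else z s i))
       = (\<Sum>s\<in>S. \<Sum>i\<in>I. g s i (z s i)) - g s0 i0 (z s0 i0) + g s0 i0 c"
proof -
  have "(\<Sum>i\<in>I. g s i (if s = s0 \<and> i = i0 then c else z s i))
      = (\<Sum>i\<in>I. g s i (z s i)) + (if s = s0 then g s0 i0 c - g s0 i0 (z s0 i0) else 0)" for s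
  proof (cases "s = s0")
    case True
    then have "(\<Sum>i\<in>I. g s i (if s = s0 \<and> i = i0 then c else z s i))
        = (\<Sum>i\<in>I. if i = i0 then g s0 i0 c else g s0 i (z s0 i))"
      by (intro sum.cong) auto
    then show ?thesis
      using True sum_update[OF assms(2,4), of "g s0 i0 c" "\<lambda>i. g s0 i (z s0 i)"] by simp
  qed simp
  then show ?thesis
    using assms(1,3) by (simp add: sum.distrib)
qed

lemma sum_restrict_support:
  assumes "finite A" "finite T" "\<And>k. k \<in> A \<Longrightarrow> k \<notin> T \<Longrightarrow> f k = 0"
  shows "sum f A = (\<Sum>k\<in>T. if k \<in> A then f k else 0)"
proof -
  have "sum f A = sum f (T \<inter> A)"
    by (rule sum.mono_neutral_right) (use assms in auto)
  also have "\<dots> = (\<Sum>k\<in>T. if k \<in> A then f k else 0)"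
    by (rule sum.inter_restrict[OF assms(2)])
  finally show ?thesis .
qed

lemma partial_quadratic:
  assumes "\<And>t. F (x(v := t)) = A + B * t + C * t\<^sup>2"
  shows "partial F x v = B + 2 * C * x v"
proof -
  have "((\<lambda>t. A + B * t + C * t\<^sup>2) has_field_derivative B + 2 * C * x v) (at (x v))"
    by (auto intro!: derivative_eq_intros simp: algebra_simps)
  then show ?thesis
    unfolding partial_def assms by (rule DERIV_imp_deriv)
qed

lemma partial_affine:
  assumes "\<And>t. F (x(v := t)) = A + B * t"
  shows "partial F x v = B"
  using partial_quadratic[of F x v A B 0] assms by simp

lemma pack_update:
  "(pack z p)((False, s0, i0) := t) = pack (\<lambda>s i. if s = s0 \<and> i = i0 then t else z s i) p"
  "(pack z p)((True, s0, i0) := t) = pack z (\<lambda>s i. if s = s0 \<and> i = i0 then t else p s i)"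
  by (auto simp: pack_def fun_eq_iff)

lemma pack_apply [simp]: "pack z p (False, s, i) = z s i" "pack z p (True, s, i) = p s i"
  by (simp_all add: pack_def)

lemma cfun_pack:
  "cfun a \<rho> m (Lo s i) (pack z p) = - (a + \<rho> * z s i)"
  "cfun a \<rho> m (Up s i) (pack z p) = a + \<rho> * z s i - 1"
  "cfun a \<rho> m (EqP s) (pack z p) = (\<Sum>i\<in>{1..m}. p s i) - PS a s"
  "cfun a \<rho> m Mean (pack z p) = (\<Sum>s\<in>Sset a. \<Sum>i\<in>{1..m}. p s i * z s i)"
  "cfun a \<rho> m Second (pack z p) = lam_gap a m z p"
  by (simp_all add: lam_gap_def)

lemma finite_Sset: "finite (Sset a)"
  by (simp add: Sset_def)

lemma partial_cfun_z:
  assumes s0: "s0 \<in> Sset a" and i0: "i0 \<in> {1..m}"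
  shows "partial (cfun a \<rho> m k) (pack z p) (False, s0, i0) =
    (case k of Lo s i \<Rightarrow> if s = s0 \<and> i = i0 then - \<rho> else 0
     | Up s i \<Rightarrow> if s = s0 \<and> i = i0 then \<rho> else 0
     | EqP s \<Rightarrow> 0
     | Mean \<Rightarrow> p s0 i0
     | Second \<Rightarrow> p s0 i0 * (2 * z s0 i0 - s0))"
proof (cases k)
  case (Lo s i)
  have "partial (cfun a \<rho> m k) (pack z p) (False, s0, i0) = (if s = s0 \<and> i = i0 then - \<rho> else 0)"
    by (rule partial_affine[where A = "if s = s0 \<and> i = i0 then - a else - (a + \<rho> * z s i)"])
      (auto simp: Lo pack_update cfun_pack)
  then show ?thesis
    using Lo by simp
next
  case (Up s i)
  have "partial (cfun a \<rho> m k) (pack z p) (False, s0, i0) = (if s = s0 \<and> i = i0 then \<rho> else 0)"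
    by (rule partial_affine[where A = "if s = s0 \<and> i = i0 then a - 1 else a + \<rho> * z s i - 1"])
      (auto simp: Up pack_update cfun_pack)
  then show ?thesis
    using Up by simp
next
  case (EqP s)
  have "partial (cfun a \<rho> m k) (pack z p) (False, s0, i0) = 0"
    by (rule partial_affine[where A = "(\<Sum>i\<in>{1..m}. p s i) - PS a s"])
      (simp add: EqP pack_update cfun_pack)
  then show ?thesis
    using EqP by simp
next
  case Mean
  have "partial (cfun a \<rho> m k) (pack z p) (False, s0, i0) = p s0 i0"
  proof (rule partial_affine[where A = "(\<Sum>s\<in>Sset a. \<Sum>i\<in>{1..m}. p s i * z s i) - p s0 i0 * z s0 i0"])
    fix t
    show "cfun a \<rho> m k ((pack z p)((False, s0, i0) := t))
      = (\<Sum>s\<in>Sset a. \<Sum>i\<in>{1..m}. p s i * z s i) - p s0 i0 * z s0 i0 + p s0 i0 * t"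
      using sum_sum_update[OF finite_Sset finite_atLeastAtMost s0 i0, of "\<lambda>s i w. p s i * w" t z]
      by (simp add: Mean pack_update cfun_pack)
  qed
  then show ?thesis
    using Mean by simp
next
  case Second
  have "partial (cfun a \<rho> m k) (pack z p) (False, s0, i0)
      = - p s0 i0 * s0 + 2 * p s0 i0 * pack z p (False, s0, i0)"
  proof (rule partial_quadratic[where A = "lam_gap a m z p - p s0 i0 * ((z s0 i0)\<^sup>2 - s0 * z s0 i0)"])
    fix t
    show "cfun a \<rho> m k ((pack z p)((False, s0, i0) := t))
      = lam_gap a m z p - p s0 i0 * ((z s0 i0)\<^sup>2 - s0 * z s0 i0) + - p s0 i0 * s0 * t + p s0 i0 * t\<^sup>2"
      using sum_sum_update[OF finite_Sset finite_atLeastAtMost s0 i0, of "\<lambda>s i w. p s i * (w\<^sup>2 - s * w)" t z]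
      by (simp add: Second pack_update cfun_pack lam_gap_def algebra_simps)
  qed
  then show ?thesis
    using Second by (simp add: algebra_simps)
qed

lemma partial_cfun_p:
  assumes s0: "s0 \<in> Sset a" and i0: "i0 \<in> {1..m}"
  shows "partial (cfun a \<rho> m k) (pack z p) (True, s0, i0) =
    (case k of Lo s i \<Rightarrow> 0
     | Up s i \<Rightarrow> 0
     | EqP s \<Rightarrow> if s = s0 then 1 else 0
     | Mean \<Rightarrow> z s0 i0
     | Second \<Rightarrow> (z s0 i0)\<^sup>2 - s0 * z s0 i0)"
proof (cases k)
  case (Lo s i)
  have "partial (cfun a \<rho> m k) (pack z p) (True, s0, i0) = 0"
    by (rule partial_affine[where A = "- (a + \<rho> * z s i)"]) (simp add: Lo pack_update)
  then show ?thesis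
    using Lo by simp
next
  case (Up s i)
  have "partial (cfun a \<rho> m k) (pack z p) (True, s0, i0) = 0"
    by (rule partial_affine[where A = "a + \<rho> * z s i - 1"]) (simp add: Up pack_update)
  then show ?thesis
    using Up by simp
next
  case (EqP s)
  have "partial (cfun a \<rho> m k) (pack z p) (True, s0, i0) = (if s = s0 then 1 else 0)"
  proof (rule partial_affine[where A = "(\<Sum>i\<in>{1..m}. p s i) - PS a s - (if s = s0 then p s i0 else 0)"])
    fix t
    show "cfun a \<rho> m k ((pack z p)((True, s0, i0) := t))
      = (\<Sum>i\<in>{1..m}. p s i) - PS a s - (if s = s0 then p s i0 else 0) + (if s = s0 then 1 else 0) * t"
      using sum_update[OF finite_atLeastAtMost i0, of t "p s0"]
      by (cases "s = s0") (simp_all add: EqP pack_update cfun_pack)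
  qed
  then show ?thesis
    using EqP by simp
next
  case Mean
  have "partial (cfun a \<rho> m k) (pack z p) (True, s0, i0) = z s0 i0"
  proof (rule partial_affine[where A = "(\<Sum>s\<in>Sset a. \<Sum>i\<in>{1..m}. p s i * z s i) - p s0 i0 * z s0 i0"])
    fix t
    show "cfun a \<rho> m k ((pack z p)((True, s0, i0) := t))
      = (\<Sum>s\<in>Sset a. \<Sum>i\<in>{1..m}. p s i * z s i) - p s0 i0 * z s0 i0 + z s0 i0 * t"
      using sum_sum_update[OF finite_Sset finite_atLeastAtMost s0 i0, of "\<lambda>s i w. w * z s i" t p]
      by (simp add: Mean pack_update cfun_pack algebra_simps)
  qed
  then show ?thesis
    using Mean by simp
next
  case Second
  have "partial (cfun a \<rho> m k) (pack z p) (True, s0, i0) = (z s0 i0)\<^sup>2 - s0 * z s0 i0"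
  proof (rule partial_affine[where A = "lam_gap a m z p - p s0 i0 * ((z s0 i0)\<^sup>2 - s0 * z s0 i0)"])
    fix t
    show "cfun a \<rho> m k ((pack z p)((True, s0, i0) := t))
      = lam_gap a m z p - p s0 i0 * ((z s0 i0)\<^sup>2 - s0 * z s0 i0) + ((z s0 i0)\<^sup>2 - s0 * z s0 i0) * t"
      using sum_sum_update[OF finite_Sset finite_atLeastAtMost s0 i0,
          of "\<lambda>s i w. w * ((z s i)\<^sup>2 - s * z s i)" t p]
      by (simp add: Second pack_update lam_gap_def algebra_simps)
  qed
  then show ?thesis
    using Second by simp
qed

lemma finite_active_constrs: "finite (active_constrs a \<rho> m x)"
proof (rule finite_subset)
  show "active_constrs a \<rho> m x \<subseteq> (\<lambda>(s, i). Lo s i) ` (Sset a \<times> {1..m}) \<union> (\<lambda>(s, i). Up s i) ` (Sset a \<times> {1..m})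
      \<union> EqP ` Sset a \<union> {Mean, Second}"
    unfolding active_constrs_def inequality_constrs_def equality_constrs_def by auto
qed (simp add: finite_Sset)

lemma active_constrs_cases:
  assumes "k \<in> active_constrs a \<rho> m x"
  obtains s i where "s \<in> Sset a" "i \<in> {1..m}" "k = Lo s i" "cfun a \<rho> m k x = 0"
  | s i where "s \<in> Sset a" "i \<in> {1..m}" "k = Up s i" "cfun a \<rho> m k x = 0"
  | s where "s \<in> Sset a" "k = EqP s"
  | "k = Mean"
  | "k = Second"
  using assms unfolding active_constrs_def inequality_constrs_def equality_constrs_def by auto

lemma equality_constrs_active:
  "Mean \<in> active_constrs a \<rho> m x" "s \<in> Sset a \<Longrightarrow> EqP s \<in> active_constrs a \<rho> m x"
  unfolding active_constrs_def equality_constrs_def by auto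

lemma Second_active: "lam_gap a m z p = 0 \<Longrightarrow> Second \<in> active_constrs a \<rho> m (pack z p)"
  unfolding active_constrs_def inequality_constrs_def by (simp add: lam_gap_def)

lemma bound_constr_active_iff:
  assumes "s \<in> Sset a" "i \<in> {1..m}"
  shows "Lo s i \<in> active_constrs a \<rho> m x \<longleftrightarrow> cfun a \<rho> m (Lo s i) x = 0"
    "Up s i \<in> active_constrs a \<rho> m x \<longleftrightarrow> cfun a \<rho> m (Up s i) x = 0"
  using assms unfolding active_constrs_def inequality_constrs_def equality_constrs_def by auto

context moment_problem
begin

lemma bound_constr_active_pack:
  assumes "s \<in> Sset a" "i \<in> {1..m}"
  shows "Lo s i \<in> active_constrs a \<rho> m (pack z p) \<longleftrightarrow> z s i = zmin"
    "Up s i \<in> active_constrs a \<rho> m (pack z p) \<longleftrightarrow> z s i = zmax"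
  using bound_constr_active_iff[OF assms] rho_pos
  by (auto simp: cfun_pack zmin_def zmax_def field_simps)

lemma active_gradient_z:
  assumes s0: "s0 \<in> Sset a" and i0: "i0 \<in> {1..m}" and tight: "lam_gap a m z p = 0"
  shows "(\<Sum>k\<in>active_constrs a \<rho> m (pack z p). c k * partial (cfun a \<rho> m k) (pack z p) (False, s0, i0))
    = (if z s0 i0 = zmin then - \<rho> * c (Lo s0 i0) else 0) + (if z s0 i0 = zmax then \<rho> * c (Up s0 i0) else 0)
      + c Mean * p s0 i0 + c Second * (p s0 i0 * (2 * z s0 i0 - s0))"
proof -
  let ?A = "active_constrs a \<rho> m (pack z p)"
  have "(\<Sum>k\<in>?A. c k * partial (cfun a \<rho> m k) (pack z p) (False, s0, i0))
      = (\<Sum>k\<in>{Lo s0 i0, Up s0 i0, Mean, Second}.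
          if k \<in> ?A then c k * partial (cfun a \<rho> m k) (pack z p) (False, s0, i0) else 0)"
    by (rule sum_restrict_support[OF finite_active_constrs])
      (auto simp: partial_cfun_z[OF s0 i0] split: constr.split)
  also have "\<dots> = (if z s0 i0 = zmin then - \<rho> * c (Lo s0 i0) else 0)
      + (if z s0 i0 = zmax then \<rho> * c (Up s0 i0) else 0)
      + c Mean * p s0 i0 + c Second * (p s0 i0 * (2 * z s0 i0 - s0))"
    using bound_constr_active_pack[OF s0 i0] equality_constrs_active Second_active[OF tight]
    by (simp add: partial_cfun_z[OF s0 i0])
  finally show ?thesis .
qed

lemma active_gradient_p:
  assumes s0: "s0 \<in> Sset a" and i0: "i0 \<in> {1..m}" and tight: "lam_gap a m z p = 0"
  shows "(\<Sum>k\<in>active_constrs a \<rho> m (pack z p). c k * partial (cfun a \<rho> m k) (pack z p) (True, s0, i0))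
    = c (EqP s0) + c Mean * z s0 i0 + c Second * ((z s0 i0)\<^sup>2 - s0 * z s0 i0)"
proof -
  let ?A = "active_constrs a \<rho> m (pack z p)"
  have "(\<Sum>k\<in>?A. c k * partial (cfun a \<rho> m k) (pack z p) (True, s0, i0))
      = (\<Sum>k\<in>{EqP s0, Mean, Second}.
          if k \<in> ?A then c k * partial (cfun a \<rho> m k) (pack z p) (True, s0, i0) else 0)"
    by (rule sum_restrict_support[OF finite_active_constrs])
      (auto simp: partial_cfun_p[OF s0 i0] split: constr.split)
  also have "\<dots> = c (EqP s0) + c Mean * z s0 i0 + c Second * ((z s0 i0)\<^sup>2 - s0 * z s0 i0)"
    using equality_constrs_active s0 Second_active[OF tight]
    by (simp add: partial_cfun_p[OF s0 i0])
  finally show ?thesis .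
qed

text \<open>Stationarity in every \<open>p\<close>-variable and in the \<open>z\<close>-variables of two interior atoms: if
  \<open>c Second \<noteq> 0\<close>, the \<open>p\<close>-equations make both conditionals point masses at \<open>x\<close> and
  \<open>x + 1/2\<close>, which is incompatible with the mean constraint and a tight second constraint.\<close>

lemma stationary_multiplier_Second_zero:
  assumes feas: "lam_feasible a \<rho> m z p" and tight: "lam_gap a m z p = 0"
    and i0: "i0 \<in> {1..m}" and j0: "j0 \<in> {1..m}"
    and grad_p: "\<And>s i. s \<in> Sset a \<Longrightarrow> i \<in> {1..m} \<Longrightarrow>
      c (EqP s) + c Mean * z s i + c Second * ((z s i)\<^sup>2 - s * z s i) = 0"
    and e1: "c Mean + c Second * (2 * z (-a) i0 + a) = 0"
    and e2: "c Mean + c Second * (2 * z (1 - a) j0 - (1 - a)) = 0"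
  shows "c Second = 0"
proof (rule ccontr)
  assume cS: "c Second \<noteq> 0"
  define x where "x = z (-a) i0"
  define y where "y = z (1 - a) j0"
  have S: "-a \<in> Sset a" "1 - a \<in> Sset a"
    by (auto simp: Sset_def)
  have ex: "c Mean + c Second * (2 * x + a) = 0" and ey: "c Mean + c Second * (2 * y - (1 - a)) = 0"
    using e1 e2 by (simp_all add: x_def y_def)
  have point_mass: "z s i = r"
    if "s \<in> Sset a" "i \<in> {1..m}" "r = z s k" "k \<in> {1..m}" "c Mean + c Second * (2 * r - s) = 0"
    for s i k r
  proof -
    have "c Second * (z s i - r)\<^sup>2
        = (c (EqP s) + c Mean * z s i + c Second * ((z s i)\<^sup>2 - s * z s i))
          - (c (EqP s) + c Mean * r + c Second * (r\<^sup>2 - s * r))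
          - (c Mean + c Second * (2 * r - s)) * (z s i - r)"
      by (simp add: algebra_simps power2_eq_square)
    also have "\<dots> = 0"
      using grad_p[OF that(1,2)] grad_p[OF that(1,4)] that(3,5) by simp
    finally show ?thesis
      using cS by simp
  qed
  have "c Second * (2 * y - 2 * x - 1)
      = (c Mean + c Second * (2 * y - (1 - a))) - (c Mean + c Second * (2 * x + a))"
    by (simp add: algebra_simps)
  then have "y = x + 1 / 2"
    using ex ey cS by simp
  have masses: "(\<Sum>i\<in>{1..m}. p (-a) i * G (z (-a) i)) = (1 - a) * G x"
    "(\<Sum>i\<in>{1..m}. p (1 - a) i * G (z (1 - a) i)) = a * G y" for G :: "real \<Rightarrow> real"
  proof -
    have "(\<Sum>i\<in>{1..m}. p (-a) i * G (z (-a) i)) = (\<Sum>i\<in>{1..m}. p (-a) i) * G x"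
      unfolding sum_distrib_right using point_mass[OF S(1) _ x_def i0] ex by (intro sum.cong) auto
    moreover have "(\<Sum>i\<in>{1..m}. p (1 - a) i * G (z (1 - a) i)) = (\<Sum>i\<in>{1..m}. p (1 - a) i) * G y"
      unfolding sum_distrib_right using point_mass[OF S(2) _ y_def j0] ey by (intro sum.cong) auto
    ultimately show "(\<Sum>i\<in>{1..m}. p (-a) i * G (z (-a) i)) = (1 - a) * G x"
      "(\<Sum>i\<in>{1..m}. p (1 - a) i * G (z (1 - a) i)) = a * G y"
      using feas S unfolding lam_feasible_def by (simp_all add: PS_minus PS_plus)
  qed
  have "(1 - a) * x + a * y = 0"
    using feas masses[of "\<lambda>w. w"] unfolding lam_feasible_def sum_Sset by simp
  then have xy: "x = - a / 2" "y = (1 - a) / 2"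
    using \<open>y = x + 1 / 2\<close> by (simp_all add: algebra_simps)
  have "lam_gap a m z p = (1 - a) * (x\<^sup>2 - (-a) * x) + a * (y\<^sup>2 - (1 - a) * y)"
    using masses[of "\<lambda>w. w\<^sup>2 - (-a) * w"] masses[of "\<lambda>w. w\<^sup>2 - (1 - a) * w"]
    unfolding lam_gap_def sum_Sset by simp
  also have "\<dots> = - (a * (1 - a)) / 4"
    unfolding xy by (simp add: field_simps power2_eq_square)
  finally have "lam_gap a m z p = - (a * (1 - a)) / 4" .
  then show False
    using tight a_pos a_lt1 by simp
qed

lemma lam_optimal_LICQ:
  assumes m: "3 \<le> m" and opt: "lam_optimal \<Phi> a \<rho> m z p"
  shows "LICQ a \<rho> m (pack z p)"
  unfolding LICQ_def
proof (intro allI impI)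
  fix c :: "constr \<Rightarrow> real"
  assume H: "\<forall>v\<in>lam_vars a m.
    (\<Sum>k\<in>active_constrs a \<rho> m (pack z p). c k * partial (cfun a \<rho> m k) (pack z p) v) = 0"
  have feas: "lam_feasible a \<rho> m z p"
    using opt unfolding lam_optimal_def by blast
  have tight: "lam_gap a m z p = 0"
    using lam_optimal_tight[OF m opt] .
  have S: "-a \<in> Sset a" "1 - a \<in> Sset a"
    by (auto simp: Sset_def)
  have grad_z: "(if z s i = zmin then - \<rho> * c (Lo s i) else 0) + (if z s i = zmax then \<rho> * c (Up s i) else 0)
      + c Mean * p s i + c Second * (p s i * (2 * z s i - s)) = 0" if "s \<in> Sset a" "i \<in> {1..m}" for s i
    using H that active_gradient_z[OF that tight, of c] unfolding lam_vars_def by auto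
  have grad_p: "c (EqP s) + c Mean * z s i + c Second * ((z s i)\<^sup>2 - s * z s i) = 0"
    if "s \<in> Sset a" "i \<in> {1..m}" for s i
    using H that active_gradient_p[OF that tight, of c] unfolding lam_vars_def by auto
  obtain i0 j0 where i0: "i0 \<in> {1..m}" "zmin < z (-a) i0" and j0: "j0 \<in> {1..m}" "z (1 - a) j0 < zmax"
    using lam_feasible_interior_atoms[OF feas] by blast
  define x where "x = z (-a) i0"
  define y where "y = z (1 - a) j0"
  have sep: "x + 1 / 2 \<le> y"
    using lam_optimal_separated[OF m opt i0(1) j0(1) i0(2) j0(2)] by (simp add: x_def y_def)
  have x: "x \<noteq> zmin" "x \<noteq> zmax" and y: "y \<noteq> zmin" "y \<noteq> zmax"
    using i0(2) j0(2) sep lam_feasibleD(1)[OF feas S(1) i0(1)] lam_feasibleD(1)[OF feas S(2) j0(1)]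
    by (auto simp: x_def y_def)
  have "p (-a) i0 * (c Mean + c Second * (2 * x + a)) = 0"
    using grad_z[OF S(1) i0(1)] x by (simp add: x_def algebra_simps)
  then have e1: "c Mean + c Second * (2 * x + a) = 0"
    using lam_feasibleD(2)[OF feas S(1) i0(1)] by simp
  have "p (1 - a) j0 * (c Mean + c Second * (2 * y - (1 - a))) = 0"
    using grad_z[OF S(2) j0(1)] y by (simp add: y_def algebra_simps)
  then have e2: "c Mean + c Second * (2 * y - (1 - a)) = 0"
    using lam_feasibleD(2)[OF feas S(2) j0(1)] by simp
  have cS: "c Second = 0"
    using stationary_multiplier_Second_zero[OF feas tight i0(1) j0(1) grad_p] e1 e2
    by (simp add: x_def y_def)
  then have cM: "c Mean = 0"
    using e1 by simp
  show "\<forall>k\<in>active_constrs a \<rho> m (pack z p). c k = 0"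
  proof
    fix k assume k: "k \<in> active_constrs a \<rho> m (pack z p)"
    then show "c k = 0"
    proof (cases rule: active_constrs_cases)
      case (1 s i)
      then show ?thesis
        using grad_z[OF 1(1,2)] bound_constr_active_pack[OF 1(1,2)] k cS cM zmin_less_zmax rho_pos by auto
    next
      case (2 s i)
      then show ?thesis
        using grad_z[OF 2(1,2)] bound_constr_active_pack[OF 2(1,2)] k cS cM zmin_less_zmax rho_pos by auto
    next
      case (3 s)
      then show ?thesis
        using grad_p[OF 3(1) i0(1)] cS cM by simp
    qed (use cS cM in simp_all)
  qed
qed

end

theorem proposition2p2:
  fixes \<Phi> :: "real \<Rightarrow> real" and a \<rho> :: real and m :: nat
  assumes cont: "continuous_on {0..1} \<Phi>"
    and sconv: "strictly_convex_on {0..1} \<Phi>"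
    and a: "0 < a" "a < 1"
    and rho: "0 < \<rho>" "\<rho> < 1"
    and m: "3 \<le> m"
  shows
    \<comment> \<open>1) the maximum defining Lambda^(m) is attained and equals Gamma\<close>
    "((\<exists>z p. lam_optimal \<Phi> a \<rho> m z p) \<and> Lambda \<Phi> a \<rho> m = Gamma \<Phi> a \<rho> \<and>
      (\<forall>z p. lam_optimal \<Phi> a \<rho> m z p \<longrightarrow> lam_obj \<Phi> a \<rho> m z p = Gamma \<Phi> a \<rho>))
   \<and> \<comment> \<open>2) optimal solutions satisfy E[Z^2] = E[SZ]\<close>
     (\<forall>Q. gamma_optimal \<Phi> a \<rho> Q \<longrightarrow> jointE a Q (\<lambda>s z. z\<^sup>2) = jointE a Q (\<lambda>s z. s * z))
   \<and> (\<forall>z p. lam_optimal \<Phi> a \<rho> m z p \<longrightarrow>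
        (\<Sum>s\<in>Sset a. \<Sum>i\<in>{1..m}. p s i * ((z s i)\<^sup>2 - s * z s i)) = 0)
   \<and> \<comment> \<open>3) separation of interior points\<close>
     (\<forall>z p. lam_optimal \<Phi> a \<rho> m z p \<longrightarrow>
        (\<forall>i\<in>{1..m}. \<forall>j\<in>{1..m}. z (-a) i > -a / \<rho> \<and> z (1 - a) j < (1 - a) / \<rho> \<longrightarrow>
            z (1 - a) j \<ge> z (-a) i + 1 / 2) \<and>
        (\<exists>i\<in>{1..m}. z (-a) i > -a / \<rho>) \<and> (\<exists>j\<in>{1..m}. z (1 - a) j < (1 - a) / \<rho>))
   \<and> \<comment> \<open>4) LICQ at every optimal solution\<close>
     (\<forall>z p. lam_optimal \<Phi> a \<rho> m z p \<longrightarrow> LICQ a \<rho> m (pack z p))"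
proof -
  interpret moment_problem \<Phi> a \<rho>
    using cont sconv a rho by unfold_locales
  have feasible: "lam_feasible a \<rho> m z p" if "lam_optimal \<Phi> a \<rho> m z p" for z p
    using that by (simp add: lam_optimal_def)
  show ?thesis
    unfolding zmin_def[symmetric] zmax_def[symmetric] lam_gap_def[symmetric]
    using lam_optimal_exists[OF m] Lambda_eq_hull_max[OF m] Gamma_eq_hull_max lam_optimal_obj[OF m]
      gamma_optimal_tight lam_optimal_tight[OF m] lam_optimal_separated[OF m]
      lam_feasible_interior_atoms[OF feasible] lam_optimal_LICQ[OF m]
    by auto
qed

end
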